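(* Let $r\in(0,1]$ and $n\in\mathbb N$. For continuous functions $a_{\mathbf P}:(0,\infty)\to\mathbb R$, indexed by the partitions $\mathbf P=\{P_1,\dots,P_l\}$ of $\{1,\dots,n\}$ with $|P_i|\le 1/r$ for all $i$, the family $$(\tilde\Theta^n_{\Omega;r})_{\mu_r}=\sum_{\mathbf P}a_{\mathbf P}\big(\|\pi^{1/r}(\mu_r)\|\big)(\tau^{\mathbf P}_{\Omega;r})_{\mu_r}$$ is a congruent family of $n$-tensor fields on $\mathcal M^r(\Omega)$. Furthermore, for constants $c_{\mathbf P}\in\mathbb R$, indexed by the partitions $\mathbf P=\{P_1,\dots,P_l\}$ of $\{1,\dots,n\}$ with $1<|P_i|\le 1/r$ for all $i$, the family $\Theta^n_{\Omega;r}=\sum_{\mathbf P}c_{\mathbf P}\tau^{\mathbf P}_{\Omega;r}$ is a congruent family of $n$-tensor fields on $\mathcal P^r(\Omega)$.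
   Context: For a measurable space $\Omega$: $\mathcal S(\Omega)$ finite signed measures, $\mathcal M(\Omega)$ finite measures with $\|\mu\|=\mu(\Omega)$, $\mathcal P(\Omega)$ probability measures. For $r\in(0,1]$, $\mathcal S^r(\Omega)$ is the Banach lattice of $r$-th powers of finite signed measures, whose elements are $\phi\mu^r$ with $\mu\in\mathcal M(\Omega)$, $\phi\in L^{1/r}(\Omega,\mu)$ (with $\phi\mu^r=\psi\nu^r$ iff $\phi(d\mu/d\rho)^r=\psi(d\nu/d\rho)^r$ $\rho$-a.e. for a dominating $\rho$); $\pi^{1/r}(\phi\mu^r)=\mathrm{sign}(\phi)|\phi|^{1/r}\mu$, so $\pi^{1/r}(\mu^r)=\mu$. $\mathcal M^r(\Omega)=\{\mu^r:\mu\in\mathcal M(\Omega)\}$, $\mathcal P^r(\Omega)=\{\mu^r:\mu\in\mathcal P(\Omega)\}$, with tangent spaces $T_{\mu^r}\mathcal M^r(\Omega)=\{\phi\mu^r:\phi\in L^{1/r}(\Omega,\mu)\}$ and $T_{\mu^r}\mathcal P^r(\Omega)=\{\phi\mu^r:\int\phi\,d\mu=0\}$. Canonical tensors: for $m\ge1$, $0<r\le1/m$, $(\tau^m_{\Omega;r})_{\mu^r}(\phi_1\mu^r,\dots,\phi_m\mu^r)=r^{-m}\int\phi_1\cdots\phi_m\,d\mu$; for a partition $\mathbf P=\{P_1,\dots,P_l\}$ of $\{1,\dots,n\}$ with $|P_i|\le1/r$, $(\tau^{\mathbf P}_{\Omega;r})_{\mu^r}(V_1,\dots,V_n)=\prod_i(\tau^{|P_i|}_{\Omega;r})_{\mu^r}((V_j)_{j\in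 P_i})$. A Markov kernel $K:\Omega\to\mathcal P(\Omega')$ induces $K_*\mu(A')=\int K(\omega)(A')d\mu(\omega)$; it is congruent if there is a measurable $\kappa:\Omega'\to\Omega$ with $\kappa_*K(\omega)=\delta_\omega$. The formal derivative of $K_r(\mu^r)=(K_*\mu)^r$ is $d_{\mu^r}K_r(\phi\mu^r)=\frac{d\{K_*(\phi\mu)\}}{d\mu'}\mu'^r$, $\mu'=K_*\mu$, and $(K_r^*\Psi)_{\mu^r}(V_1,\dots,V_n)=\Psi_{(K_*\mu)^r}(d_{\mu^r}K_rV_1,\dots,d_{\mu^r}K_rV_n)$. A family $(\Theta_\Omega)$ of $n$-tensor fields (continuous families of multilinear forms on the tangent spaces) on $\mathcal M^r(\Omega)$ (or $\mathcal P^r(\Omega)$), one for each measurable space, is congruent if $K_r^*\Theta_{\Omega'}=\Theta_\Omega$ for every congruent Markov kernel $K:\Omega\to\mathcal P(\Omega')$. *)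

theory Defs
  imports "HOL-Probability.Probability" "HOL-Library.Disjoint_Sets"
begin

(* A measurable space Omega is an 'a measure (only its
   sigma-algebra matters).  A point mu^r of M^r(Omega) is represented by the finite
   measure mu; a tangent vector phi mu^r at mu^r is represented by its density phi,
   a function in L^{1/r}(Omega, mu). *)

definition Mr_point :: "'a measure \<Rightarrow> 'a measure \<Rightarrow> bool" where
  "Mr_point \<Omega> \<mu> \<longleftrightarrow> sets \<mu> = sets \<Omega> \<and> finite_measure \<mu> \<and> emeasure \<mu> (space \<mu>) \<noteq> 0"

definition Pr_point :: "'a measure \<Rightarrow> 'a measure \<Rightarrow> bool" where
  "Pr_point \<Omega> \<mu> \<longleftrightarrow> sets \<mu> = sets \<Omega> \<and> prob_space \<mu>"

definition Lr_dens :: "real \<Rightarrow> 'a measure \<Rightarrow> ('a \<Rightarrow> real) \<Rightarrow> bool" where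
  "Lr_dens r \<mu> \<phi> \<longleftrightarrow> \<phi> \<in> borel_measurable \<mu> \<and> integrable \<mu> (\<lambda>x. \<bar>\<phi> x\<bar> powr (1 / r))"

definition TM :: "real \<Rightarrow> 'a measure \<Rightarrow> ('a \<Rightarrow> real) \<Rightarrow> bool" where
  "TM r \<mu> \<phi> \<longleftrightarrow> Lr_dens r \<mu> \<phi>"

definition TP :: "real \<Rightarrow> 'a measure \<Rightarrow> ('a \<Rightarrow> real) \<Rightarrow> bool" where
  "TP r \<mu> \<phi> \<longleftrightarrow> Lr_dens r \<mu> \<phi> \<and> (\<integral>x. \<phi> x \<partial>\<mu>) = 0"

(* Norm distance in S^r(Omega) between phi mu^r and psi nu^r, computed with the
   dominating measure rho = mu + nu. *)
definition dom_sum :: "'a measure \<Rightarrow> 'a measure \<Rightarrow> 'a measure" where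
  "dom_sum \<mu> \<nu> = measure_of (space \<mu>) (sets \<mu>) (\<lambda>A. emeasure \<mu> A + emeasure \<nu> A)"

definition Sr_dist :: "real \<Rightarrow> 'a measure \<Rightarrow> ('a \<Rightarrow> real) \<Rightarrow> 'a measure \<Rightarrow> ('a \<Rightarrow> real) \<Rightarrow> real" where
  "Sr_dist r \<mu> \<phi> \<nu> \<psi> =
     (let \<rho> = dom_sum \<mu> \<nu> in
       (\<integral>x. \<bar>\<phi> x * enn2real (RN_deriv \<rho> \<mu> x) powr r - \<psi> x * enn2real (RN_deriv \<rho> \<nu> x) powr r\<bar> powr (1 / r) \<partial>\<rho>) powr r)"

(* An n-tensor field on the manifold with points Pt and tangent spaces T:
   well defined on tangent vectors (a.e. classes), multilinear in each of the n
   arguments, and continuous on the n-fold tangent product as a subset of S^r(Omega)^(n+1). *)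
definition tensor_field :: "real \<Rightarrow> nat \<Rightarrow> ('a measure \<Rightarrow> bool) \<Rightarrow> ('a measure \<Rightarrow> ('a \<Rightarrow> real) \<Rightarrow> bool)
    \<Rightarrow> ('a measure \<Rightarrow> (nat \<Rightarrow> 'a \<Rightarrow> real) \<Rightarrow> real) \<Rightarrow> bool" where
  "tensor_field r n Pt T \<Theta> \<longleftrightarrow>
     (\<forall>\<mu> V W. Pt \<mu> \<and> (\<forall>j\<in>{1..n}. T \<mu> (V j) \<and> T \<mu> (W j) \<and> (AE x in \<mu>. V j x = W j x))
        \<longrightarrow> \<Theta> \<mu> V = \<Theta> \<mu> W) \<and>
     (\<forall>\<mu> V i \<psi> c. Pt \<mu> \<and> (\<forall>j\<in>{1..n}. T \<mu> (V j)) \<and> i \<in> {1..n} \<and> T \<mu> \<psi>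
        \<longrightarrow> \<Theta> \<mu> (V(i := (\<lambda>x. c * V i x + \<psi> x))) = c * \<Theta> \<mu> V + \<Theta> \<mu> (V(i := \<psi>))) \<and>
     (\<forall>\<mu> V. Pt \<mu> \<and> (\<forall>j\<in>{1..n}. T \<mu> (V j)) \<longrightarrow>
        (\<forall>e>0. \<exists>d>0. \<forall>\<nu> W. Pt \<nu> \<and> (\<forall>j\<in>{1..n}. T \<nu> (W j))
            \<and> Sr_dist r \<mu> (\<lambda>_. 1) \<nu> (\<lambda>_. 1) < d \<and> (\<forall>j\<in>{1..n}. Sr_dist r \<mu> (V j) \<nu> (W j) < d)
          \<longrightarrow> \<bar>\<Theta> \<nu> W - \<Theta> \<mu> V\<bar> < e))"

definition congruent_kernel :: "'a measure \<Rightarrow> 'b measure \<Rightarrow> ('a \<Rightarrow> 'b measure) \<Rightarrow> bool" where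
  "congruent_kernel \<Omega> \<Omega>' K \<longleftrightarrow> K \<in> \<Omega> \<rightarrow>\<^sub>M prob_algebra \<Omega>' \<and>
     (\<exists>\<kappa> \<in> \<Omega>' \<rightarrow>\<^sub>M \<Omega>. \<forall>\<omega>\<in>space \<Omega>. distr (K \<omega>) \<Omega> \<kappa> = return \<Omega> \<omega>)"

definition kpush :: "'b measure \<Rightarrow> ('a \<Rightarrow> 'b measure) \<Rightarrow> 'a measure \<Rightarrow> 'b measure" where
  "kpush \<Omega>' K \<mu> = measure_of (space \<Omega>') (sets \<Omega>') (\<lambda>A. \<integral>\<^sup>+\<omega>. emeasure (K \<omega>) A \<partial>\<mu>)"

(* density d{K_*(phi mu)}/d{K_* mu} : the formal derivative of K_r applied to phi mu^r *)
definition kderiv :: "'b measure \<Rightarrow> ('a \<Rightarrow> 'b measure) \<Rightarrow> 'a measure \<Rightarrow> ('a \<Rightarrow> real) \<Rightarrow> 'b \<Rightarrow> real" where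
  "kderiv \<Omega>' K \<mu> \<phi> = (SOME g. g \<in> borel_measurable \<Omega>' \<and> integrable (kpush \<Omega>' K \<mu>) g \<and>
      (\<forall>A\<in>sets \<Omega>'. set_lebesgue_integral (kpush \<Omega>' K \<mu>) A g = (\<integral>\<omega>. \<phi> \<omega> * measure (K \<omega>) A \<partial>\<mu>)))"

definition pullback :: "'b measure \<Rightarrow> ('a \<Rightarrow> 'b measure) \<Rightarrow> ('b measure \<Rightarrow> (nat \<Rightarrow> 'b \<Rightarrow> real) \<Rightarrow> real)
    \<Rightarrow> 'a measure \<Rightarrow> (nat \<Rightarrow> 'a \<Rightarrow> real) \<Rightarrow> real" where
  "pullback \<Omega>' K \<Psi> \<mu> V = \<Psi> (kpush \<Omega>' K \<mu>) (\<lambda>j. kderiv \<Omega>' K \<mu> (V j))"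

definition tau_block :: "real \<Rightarrow> 'a measure \<Rightarrow> nat set \<Rightarrow> (nat \<Rightarrow> 'a \<Rightarrow> real) \<Rightarrow> real" where
  "tau_block r \<mu> B V = r powr (- real (card B)) * (\<integral>\<omega>. (\<Prod>j\<in>B. V j \<omega>) \<partial>\<mu>)"

definition tauP :: "real \<Rightarrow> 'a measure \<Rightarrow> nat set set \<Rightarrow> (nat \<Rightarrow> 'a \<Rightarrow> real) \<Rightarrow> real" where
  "tauP r \<mu> P V = (\<Prod>B\<in>P. tau_block r \<mu> B V)"

definition partsM :: "real \<Rightarrow> nat \<Rightarrow> nat set set set" where
  "partsM r n = {P. partition_on {1..n} P \<and> (\<forall>B\<in>P. real (card B) \<le> 1 / r)}"

definition partsP :: "real \<Rightarrow> nat \<Rightarrow> nat set set set" where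
  "partsP r n = {P. partition_on {1..n} P \<and> (\<forall>B\<in>P. 1 < card B \<and> real (card B) \<le> 1 / r)}"

definition tildeTheta :: "real \<Rightarrow> nat \<Rightarrow> (nat set set \<Rightarrow> real \<Rightarrow> real) \<Rightarrow> 'a measure \<Rightarrow> (nat \<Rightarrow> 'a \<Rightarrow> real) \<Rightarrow> real" where
  "tildeTheta r n a \<mu> V = (\<Sum>P\<in>partsM r n. a P (measure \<mu> (space \<mu>)) * tauP r \<mu> P V)"

definition Theta :: "real \<Rightarrow> nat \<Rightarrow> (nat set set \<Rightarrow> real) \<Rightarrow> 'a measure \<Rightarrow> (nat \<Rightarrow> 'a \<Rightarrow> real) \<Rightarrow> real" where
  "Theta r n c \<mu> V = (\<Sum>P\<in>partsP r n. c P * tauP r \<mu> P V)"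

end

theory Submission
  imports Defs
begin

text \<open>
  A canonical tensor is a product, over the blocks \<open>B\<close> of a partition, of the integrals
  \<open>\<integral> \<Prod>j\<in>B. \<phi>\<^sub>j d\<mu>\<close>, which exist by Hoelder's inequality because \<open>|B| \<le> 1/r\<close> and
  \<open>\<phi>\<^sub>j \<in> L\<^sup>1\<^sup>/\<^sup>r(\<mu>)\<close>; well-definedness and multilinearity are then immediate.

  For continuity, two points \<open>\<mu>, \<nu>\<close> are represented by their densities \<open>f, g\<close> with respect to
  \<open>\<rho> = \<mu> + \<nu>\<close>. Then \<open>\<phi> \<mu>\<^sup>r\<close> becomes \<open>\<phi> f\<^sup>r \<in> L\<^sup>1\<^sup>/\<^sup>r(\<rho>)\<close> and the block integral becomes
  \<open>\<integral> (\<Prod>j\<in>B. \<phi>\<^sub>j f\<^sup>r) f\<^sup>1\<^sup>-\<^sup>r\<^sup>|\<^sup>B\<^sup>| d\<rho>\<close>. Hoelder's inequality bounds its variation by the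
  \<open>L\<^sup>1\<^sup>/\<^sup>r(\<rho>)\<close> distances of the factors, which are the \<open>S\<^sup>r\<close> distances, and by
  \<open>\<integral> |f - g| d\<rho>\<close>, which is controlled by the \<open>S\<^sup>r\<close> distance of \<open>\<mu>\<^sup>r\<close> and \<open>\<nu>\<^sup>r\<close>.
  In particular the total mass is continuous, so continuous coefficients of it keep the sum continuous.

  For invariance, let \<open>\<kappa>\<close> be a left inverse of the congruent kernel \<open>K\<close>. Then \<open>K \<omega>\<close> is
  concentrated on the fibre of \<open>\<kappa>\<close> over \<open>\<omega>\<close>, hence \<open>\<kappa>\<^sub>*(K\<^sub>*\<mu>) = \<mu>\<close> and the density of
  \<open>K\<^sub>*(\<phi>\<mu>)\<close> with respect to \<open>K\<^sub>*\<mu>\<close> is \<open>\<phi> \<circ> \<kappa>\<close>. So the pullback leaves every block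
  integral and the total mass unchanged.
\<close>

section \<open>Elementary inequalities\<close>

lemma powr_add_le_two_powr:
  fixes x y p :: real
  assumes "0 \<le> x" "0 \<le> y" "0 \<le> p"
  shows "(x + y) powr p \<le> 2 powr p * (x powr p + y powr p)"
proof -
  have "(x + y) powr p \<le> (2 * max x y) powr p" using assms by (intro powr_mono2) auto
  also have "\<dots> = 2 powr p * max x y powr p" by (simp add: powr_mult)
  also have "\<dots> \<le> 2 powr p * (x powr p + y powr p)"
    by (intro mult_left_mono) (auto simp: max_def)
  finally show ?thesis .
qed

lemma abs_diff_powr_le:
  fixes u v p :: real
  assumes "0 \<le> p"
  shows "\<bar>u - v\<bar> powr p \<le> 2 powr p * (\<bar>u\<bar> powr p + \<bar>v\<bar> powr p)"
proof -
  have "\<bar>u - v\<bar> powr p \<le> (\<bar>u\<bar> + \<bar>v\<bar>) powr p" using assms by (intro powr_mono2) auto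
  also have "\<dots> \<le> 2 powr p * (\<bar>u\<bar> powr p + \<bar>v\<bar> powr p)" using assms by (intro powr_add_le_two_powr) auto
  finally show ?thesis .
qed

lemma add_abs_powr_le:
  fixes u v p :: real
  assumes "0 \<le> p"
  shows "(\<bar>u\<bar> + \<bar>v\<bar>) powr p \<le> 4 powr p * (\<bar>u\<bar> powr p + \<bar>u - v\<bar> powr p)"
proof -
  have one_le: "1 \<le> (2::real) powr p" using assms by (intro ge_one_powr_ge_zero) auto
  have "(\<bar>u\<bar> + \<bar>v\<bar>) powr p \<le> (2 * \<bar>u\<bar> + \<bar>u - v\<bar>) powr p" using assms by (intro powr_mono2) auto
  also have "\<dots> \<le> 2 powr p * ((2 * \<bar>u\<bar>) powr p + \<bar>u - v\<bar> powr p)"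
    using assms by (intro powr_add_le_two_powr) auto
  also have "\<dots> \<le> 2 powr p * (2 powr p * \<bar>u\<bar> powr p + 2 powr p * \<bar>u - v\<bar> powr p)"
    using one_le by (intro mult_left_mono add_left_mono) (auto simp: powr_mult intro: mult_left_le_one_le
        order_trans[OF _ mult_right_mono[OF one_le]])
  also have "\<dots> = 4 powr p * (\<bar>u\<bar> powr p + \<bar>u - v\<bar> powr p)"
    by (simp add: algebra_simps powr_mult[symmetric])
  finally show ?thesis .
qed

lemma powr_diff_le_of_le:
  fixes x y p :: real
  assumes "0 \<le> y" "y \<le> x" "1 \<le> p"
  shows "x powr p - y powr p \<le> p * (x - y) * x powr (p - 1)"
proof (cases "y = 0 \<or> y = x")
  case True
  then show ?thesis
  proof
    assume "y = 0"
    have "x powr p = x * x powr (p - 1)"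
      using assms by (cases "x = 0") (auto simp: powr_add[of x 1 "p - 1", simplified])
    also have "\<dots> \<le> p * x * x powr (p - 1)"
      using assms by (intro mult_right_mono) (auto simp: mult_le_cancel_right1)
    finally show ?thesis using \<open>y = 0\<close> by simp
  qed simp
next
  case False
  then have y: "0 < y" "y < x" using assms by auto
  have "\<exists>z>y. z < x \<and> x powr p - y powr p = (x - y) * (p * z powr (p - 1))"
    by (rule MVT2[OF y(2)]) (use y in \<open>auto intro!: has_real_derivative_powr\<close>)
  then obtain z where z: "y < z" "z < x" "x powr p - y powr p = (x - y) * (p * z powr (p - 1))"
    by blast
  have "z powr (p - 1) \<le> x powr (p - 1)" using z y assms by (intro powr_mono2) auto
  then have "(x - y) * (p * z powr (p - 1)) \<le> (x - y) * (p * x powr (p - 1))"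
    using y assms by (intro mult_left_mono) auto
  then show ?thesis using z by (simp add: algebra_simps)
qed

lemma abs_powr_diff_le:
  fixes x y p :: real
  assumes "0 \<le> x" "0 \<le> y" "1 \<le> p"
  shows "\<bar>x powr p - y powr p\<bar> \<le> p * \<bar>x - y\<bar> * (x + y) powr (p - 1)"
proof -
  have main: "b powr p - a powr p \<le> p * (b - a) * (x + y) powr (p - 1)"
    if "0 \<le> a" "a \<le> b" "b \<le> x + y" for a b
  proof -
    have "b powr p - a powr p \<le> p * (b - a) * b powr (p - 1)"
      using that assms by (intro powr_diff_le_of_le) auto
    also have "\<dots> \<le> p * (b - a) * (x + y) powr (p - 1)"
      using that assms by (intro mult_left_mono powr_mono2) auto
    finally show ?thesis .
  qed
  show ?thesis
    using main[of y x] main[of x y] assms powr_mono2[of p y x] powr_mono2[of p x y]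
    by (cases "y \<le> x") (auto simp: abs_if)
qed

lemma powr_add_le_add_powr:
  fixes u v s :: real
  assumes "0 \<le> u" "0 \<le> v" "0 < s" "s \<le> 1"
  shows "(u + v) powr s \<le> u powr s + v powr s"
proof (cases "u + v = 0")
  case False
  then have S: "0 < u + v" using assms by auto
  have frac_le: "t / (u + v) \<le> (t / (u + v)) powr s" if "0 \<le> t" "t \<le> u + v" for t
    using powr_mono'[of s 1 "t / (u + v)"] that assms S by simp
  have "1 = u / (u + v) + v / (u + v)" using S by (simp add: add_divide_distrib[symmetric])
  also have "\<dots> \<le> (u powr s + v powr s) / (u + v) powr s"
    using frac_le[of u] frac_le[of v] assms by (simp add: powr_divide add_divide_distrib)
  finally show ?thesis using S by (simp add: le_divide_eq)
qed (use assms in simp)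

lemma abs_powr_diff_le_powr:
  fixes a b s :: real
  assumes "0 \<le> a" "0 \<le> b" "0 < s" "s \<le> 1"
  shows "\<bar>a powr s - b powr s\<bar> \<le> \<bar>a - b\<bar> powr s"
proof -
  have "c powr s - d powr s \<le> (c - d) powr s" if "0 \<le> d" "d \<le> c" for c d
    using powr_add_le_add_powr[of d "c - d" s] that assms by simp
  from this[of a b] this[of b a] show ?thesis
    using assms powr_mono2[of s b a] powr_mono2[of s a b]
    by (cases "b \<le> a") (auto simp: abs_if abs_minus_commute)
qed

lemma abs_prod_diff_le:
  fixes a b :: "'i \<Rightarrow> real"
  assumes "finite B"
  shows "\<bar>(\<Prod>j\<in>B. a j) - (\<Prod>j\<in>B. b j)\<bar>
    \<le> (\<Sum>i\<in>B. \<bar>a i - b i\<bar> * (\<Prod>j\<in>B - {i}. \<bar>a j\<bar> + \<bar>b j\<bar>))"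
  using assms
proof (induction B rule: finite_induct)
  case (insert i B)
  define M where "M j = \<bar>a j\<bar> + \<bar>b j\<bar>" for j
  have prod_a: "\<bar>\<Prod>j\<in>B. a j\<bar> \<le> (\<Prod>j\<in>B. M j)" unfolding M_def abs_prod
    by (intro prod_mono) auto
  have remove: "(\<Prod>j\<in>insert i B - {l}. M j) = M i * (\<Prod>j\<in>B - {l}. M j)" if "l \<in> B" for l
  proof -
    have "insert i B - {l} = insert i (B - {l})" using insert that by auto
    then show ?thesis using insert by simp
  qed
  have "(\<Prod>j\<in>insert i B. a j) - (\<Prod>j\<in>insert i B. b j)
      = (a i - b i) * (\<Prod>j\<in>B. a j) + b i * ((\<Prod>j\<in>B. a j) - (\<Prod>j\<in>B. b j))"
    using insert by (simp add: algebra_simps)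
  then have "\<bar>(\<Prod>j\<in>insert i B. a j) - (\<Prod>j\<in>insert i B. b j)\<bar>
      \<le> \<bar>a i - b i\<bar> * \<bar>\<Prod>j\<in>B. a j\<bar> + \<bar>b i\<bar> * \<bar>(\<Prod>j\<in>B. a j) - (\<Prod>j\<in>B. b j)\<bar>"
    by (simp add: abs_mult[symmetric] abs_triangle_ineq)
  also have "\<dots> \<le> \<bar>a i - b i\<bar> * (\<Prod>j\<in>B. M j) + M i * (\<Sum>l\<in>B. \<bar>a l - b l\<bar> * (\<Prod>j\<in>B - {l}. M j))"
    using prod_a insert.IH unfolding M_def by (intro add_mono mult_mono) auto
  also have "\<dots> = (\<Sum>l\<in>insert i B. \<bar>a l - b l\<bar> * (\<Prod>j\<in>insert i B - {l}. M j))"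
    using insert remove by (simp add: sum_distrib_left algebra_simps cong: sum.cong)
  finally show ?case unfolding M_def .
qed simp

section \<open>Hoelder's inequality\<close>

lemma prod_powr_le_weighted_sum:
  fixes a w :: "'i \<Rightarrow> real"
  assumes "finite I" "\<forall>i\<in>I. 0 \<le> a i" "\<forall>i\<in>I. 0 \<le> w i" "sum w I = 1"
  shows "(\<Prod>i\<in>I. a i powr w i) \<le> (\<Sum>i\<in>I. w i * a i)"
proof (cases "\<exists>i\<in>I. a i = 0")
  case True
  then have "(\<Prod>i\<in>I. a i powr w i) = 0" using assms(1) by (auto intro: prod_zero)
  moreover have "0 \<le> (\<Sum>i\<in>I. w i * a i)" using assms by (intro sum_nonneg) auto
  ultimately show ?thesis by linarith
next
  case False
  then have pos: "\<forall>i\<in>I. 0 < a i" using assms(2) by force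
  have "exp (\<Sum>i\<in>I. w i *\<^sub>R ln (a i)) \<le> (\<Sum>i\<in>I. w i * exp (ln (a i)))"
    using assms by (intro convex_on_sum[OF assms(1) _ exp_convex]) auto
  moreover have "exp (\<Sum>i\<in>I. w i *\<^sub>R ln (a i)) = (\<Prod>i\<in>I. a i powr w i)"
    using pos by (auto simp: exp_sum[OF assms(1)] powr_def intro!: prod.cong)
  ultimately show ?thesis using pos by simp
qed

text \<open>Integrate the weighted AM-GM inequality for the normalised functions \<open>Z i / C i\<close>.\<close>

lemma
  fixes Z :: "'i \<Rightarrow> 'a \<Rightarrow> real" and w C :: "'i \<Rightarrow> real"
  assumes I: "finite I" and w: "\<forall>i\<in>I. 0 \<le> w i" "sum w I = 1"
    and Z_meas: "\<forall>i\<in>I. Z i \<in> borel_measurable M" and Z_nonneg: "\<forall>i\<in>I. \<forall>x\<in>space M. 0 \<le> Z i x"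
    and Z_int: "\<forall>i\<in>I. integrable M (Z i)"
    and C: "\<forall>i\<in>I. integral\<^sup>L M (Z i) \<le> C i" "\<forall>i\<in>I. 0 < C i"
  shows integrable_prod_powr_holder: "integrable M (\<lambda>x. \<Prod>i\<in>I. Z i x powr w i)"
    and integral_prod_powr_le_holder: "(\<integral>x. (\<Prod>i\<in>I. Z i x powr w i) \<partial>M) \<le> (\<Prod>i\<in>I. C i powr w i)"
proof -
  define K where "K = (\<Prod>i\<in>I. C i powr w i)"
  have K_pos: "0 < K" unfolding K_def using C by (intro prod_pos) auto
  define b where "b x = K * (\<Sum>i\<in>I. w i * (Z i x / C i))" for x
  have b_int: "integrable M b" unfolding b_def using Z_int by auto
  have le_b: "(\<Prod>i\<in>I. Z i x powr w i) \<le> b x" if x: "x \<in> space M" for x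
  proof -
    have "(\<Prod>i\<in>I. Z i x powr w i) = K * (\<Prod>i\<in>I. (Z i x / C i) powr w i)"
      unfolding K_def prod.distrib[symmetric] using C Z_nonneg x
      by (intro prod.cong) (auto simp: powr_divide less_imp_le)
    also have "\<dots> \<le> K * (\<Sum>i\<in>I. w i * (Z i x / C i))"
      using K_pos C Z_nonneg x w I by (intro mult_left_mono prod_powr_le_weighted_sum) (auto simp: less_imp_le)
    finally show ?thesis unfolding b_def .
  qed
  have meas: "(\<lambda>x. \<Prod>i\<in>I. Z i x powr w i) \<in> borel_measurable M"
    using Z_meas by (intro borel_measurable_prod) auto
  have nonneg: "0 \<le> (\<Prod>i\<in>I. Z i x powr w i)" for x by (intro prod_nonneg) auto
  show int: "integrable M (\<lambda>x. \<Prod>i\<in>I. Z i x powr w i)"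
    using le_b nonneg by (intro Bochner_Integration.integrable_bound[OF b_int meas] AE_I2)
      (metis abs_of_nonneg abs_ge_self order_trans real_norm_def)
  have "(\<integral>x. (\<Prod>i\<in>I. Z i x powr w i) \<partial>M) \<le> integral\<^sup>L M b"
    using le_b by (intro integral_mono[OF int b_int]) auto
  also have "\<dots> = K * (\<Sum>i\<in>I. w i * (integral\<^sup>L M (Z i) / C i))"
    unfolding b_def using Z_int by (simp add: integral_sum)
  also have "\<dots> \<le> K * (\<Sum>i\<in>I. w i)"
    using K_pos w C by (intro mult_left_mono sum_mono) (auto simp: divide_le_eq intro: mult_left_mono)
  finally show "(\<integral>x. (\<Prod>i\<in>I. Z i x powr w i) \<partial>M) \<le> (\<Prod>i\<in>I. C i powr w i)"
    using w unfolding K_def by simp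
qed

definition rpow :: "real \<Rightarrow> real \<Rightarrow> real" where
  "rpow x s = (if s = 0 then 1 else x powr s)"

text \<open>This is \<open>x powr s\<close> with the convention \<open>0\<^sup>0 = 1\<close>, which the density factor
  \<open>f\<^sup>1\<^sup>-\<^sup>r\<^sup>|\<^sup>B\<^sup>|\<close> of a block \<open>B\<close> with \<open>r |B| = 1\<close> needs; in Isabelle \<open>0 powr 0 = 0\<close>.\<close>

lemma rpow_nonneg [simp]: "0 \<le> rpow x s"
  by (simp add: rpow_def)

lemma rpow_eq_powr: "x \<noteq> 0 \<Longrightarrow> rpow x s = x powr s"
  by (simp add: rpow_def)

lemma rpow_one [simp]: "rpow 1 s = 1"
  by (simp add: rpow_def)

lemma borel_measurable_rpow [measurable]:
  "f \<in> borel_measurable M \<Longrightarrow> (\<lambda>x. rpow (f x) s) \<in> borel_measurable M"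
  by (simp add: rpow_def)

lemma
  fixes r b :: real and X :: "'i \<Rightarrow> 'a \<Rightarrow> real" and Y :: "'a \<Rightarrow> real" and c :: "'i \<Rightarrow> real"
  assumes r: "0 < r" and B: "finite B" "r * card B \<le> 1"
    and X_meas: "\<forall>j\<in>B. X j \<in> borel_measurable M" and X_nonneg: "\<forall>j\<in>B. \<forall>x\<in>space M. 0 \<le> X j x"
    and X_int: "\<forall>j\<in>B. integrable M (\<lambda>x. X j x powr (1/r))"
    and X_bound: "\<forall>j\<in>B. (\<integral>x. X j x powr (1/r) \<partial>M) \<le> c j" "\<forall>j\<in>B. 0 < c j"
    and Y_meas: "Y \<in> borel_measurable M" and Y_nonneg: "\<forall>x\<in>space M. 0 \<le> Y x"
    and Y_int: "integrable M Y" and Y_bound: "integral\<^sup>L M Y \<le> b" "0 < b"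
  shows integrable_prod_rpow_holder:
      "integrable M (\<lambda>x. (\<Prod>j\<in>B. X j x) * rpow (Y x) (1 - r * card B))"
    and integral_prod_rpow_le_holder:
      "(\<integral>x. (\<Prod>j\<in>B. X j x) * rpow (Y x) (1 - r * card B) \<partial>M)
         \<le> (\<Prod>j\<in>B. c j powr r) * rpow b (1 - r * card B)"
proof -
  \<comment> \<open>Hoelder for the exponents \<open>1/r\<close> on \<open>B\<close> and \<open>1/s\<close> on an extra index \<open>None\<close>, dropped if \<open>s = 0\<close>\<close>
  define s :: real where "s = 1 - r * card B"
  define I :: "'i option set" where "I = (if s = 0 then Some ` B else insert None (Some ` B))"
  define Z where "Z i = (case i of None \<Rightarrow> Y | Some j \<Rightarrow> (\<lambda>x. X j x powr (1/r)))" for i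
  define w :: "'i option \<Rightarrow> real" where "w i = (case i of None \<Rightarrow> s | Some j \<Rightarrow> r)" for i
  define C :: "'i option \<Rightarrow> real" where "C i = (case i of None \<Rightarrow> b | Some j \<Rightarrow> c j)" for i
  have fin: "finite I" unfolding I_def using B by auto
  have Some_notin: "None \<notin> Some ` B" by auto
  have prod_Some: "(\<Prod>i\<in>Some ` B. h i) = (\<Prod>j\<in>B. h (Some j))" for h :: "'i option \<Rightarrow> real"
    by (simp add: prod.reindex)
  have w_sum: "sum w I = 1"
    unfolding I_def w_def s_def using B by (auto simp: sum.reindex mult.commute)
  have hyps: "\<forall>i\<in>I. 0 \<le> w i" "\<forall>i\<in>I. Z i \<in> borel_measurable M"
    "\<forall>i\<in>I. \<forall>x\<in>space M. 0 \<le> Z i x" "\<forall>i\<in>I. integrable M (Z i)"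
    "\<forall>i\<in>I. integral\<^sup>L M (Z i) \<le> C i" "\<forall>i\<in>I. 0 < C i"
    unfolding I_def w_def Z_def C_def s_def
    using r B X_meas X_nonneg X_int X_bound Y_meas Y_nonneg Y_int Y_bound by auto
  note holder = integrable_prod_powr_holder[OF fin hyps(1) w_sum hyps(2-)]
    integral_prod_powr_le_holder[OF fin hyps(1) w_sum hyps(2-)]
  have prod_Z: "(\<Prod>i\<in>I. Z i x powr w i) = (\<Prod>j\<in>B. X j x) * rpow (Y x) s"
    if x: "x \<in> space M" for x
  proof -
    have "(\<Prod>i\<in>Some ` B. Z i x powr w i) = (\<Prod>j\<in>B. X j x)"
      unfolding prod_Some Z_def w_def using X_nonneg x r by (intro prod.cong) (auto simp: powr_powr)
    then show ?thesis
      using Some_notin fin by (cases "s = 0") (auto simp: I_def Z_def w_def rpow_def mult.commute)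
  qed
  have prod_C: "(\<Prod>i\<in>I. C i powr w i) = (\<Prod>j\<in>B. c j powr r) * rpow b s"
    using Some_notin fin
    by (cases "s = 0") (auto simp: I_def C_def w_def rpow_def prod_Some mult.commute)
  show "integrable M (\<lambda>x. (\<Prod>j\<in>B. X j x) * rpow (Y x) (1 - r * card B))"
    using holder(1) prod_Z unfolding s_def by (simp cong: Bochner_Integration.integrable_cong)
  show "(\<integral>x. (\<Prod>j\<in>B. X j x) * rpow (Y x) (1 - r * card B) \<partial>M)
      \<le> (\<Prod>j\<in>B. c j powr r) * rpow b (1 - r * card B)"
    using holder(2) prod_Z prod_C unfolding s_def by (simp cong: Bochner_Integration.integral_cong)
qed

section \<open>Estimates for products of \<open>L\<^sup>1\<^sup>/\<^sup>r\<close> functions\<close>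

lemma integrable_abs_diff_powr:
  fixes F G :: "'a \<Rightarrow> real"
  assumes p: "0 \<le> p" and [measurable]: "F \<in> borel_measurable M" "G \<in> borel_measurable M"
    and "integrable M (\<lambda>x. \<bar>F x\<bar> powr p)" "integrable M (\<lambda>x. \<bar>G x\<bar> powr p)"
  shows "integrable M (\<lambda>x. \<bar>F x - G x\<bar> powr p)"
proof (rule Bochner_Integration.integrable_bound)
  show "integrable M (\<lambda>x. 2 powr p * (\<bar>F x\<bar> powr p + \<bar>G x\<bar> powr p))"
    by (intro integrable_mult_right Bochner_Integration.integrable_add assms(4,5))
  show "AE x in M. norm (\<bar>F x - G x\<bar> powr p) \<le> norm (2 powr p * (\<bar>F x\<bar> powr p + \<bar>G x\<bar> powr p))"
    using abs_diff_powr_le[OF p] by (intro AE_I2) simp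
qed measurable

lemma
  fixes F G :: "'a \<Rightarrow> real"
  assumes p: "0 \<le> p" and [measurable]: "F \<in> borel_measurable M" "G \<in> borel_measurable M"
    and F_int: "integrable M (\<lambda>x. \<bar>F x\<bar> powr p)" and D_int: "integrable M (\<lambda>x. \<bar>F x - G x\<bar> powr p)"
    and F_le: "(\<integral>x. \<bar>F x\<bar> powr p \<partial>M) \<le> a" and D_le: "(\<integral>x. \<bar>F x - G x\<bar> powr p \<partial>M) \<le> b"
  shows integrable_add_abs_powr: "integrable M (\<lambda>x. (\<bar>F x\<bar> + \<bar>G x\<bar>) powr p)"
    and integral_add_abs_powr_le: "(\<integral>x. (\<bar>F x\<bar> + \<bar>G x\<bar>) powr p \<partial>M) \<le> 4 powr p * (a + b)"
    and integral_abs_powr_le_of_diff: "(\<integral>x. \<bar>G x\<bar> powr p \<partial>M) \<le> 4 powr p * (a + b)"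
proof -
  have bound_int: "integrable M (\<lambda>x. 4 powr p * (\<bar>F x\<bar> powr p + \<bar>F x - G x\<bar> powr p))"
    using F_int D_int by auto
  note le = add_abs_powr_le[OF p]
  show int: "integrable M (\<lambda>x. (\<bar>F x\<bar> + \<bar>G x\<bar>) powr p)"
    using le by (intro Bochner_Integration.integrable_bound[OF bound_int]) auto
  have "(\<integral>x. (\<bar>F x\<bar> + \<bar>G x\<bar>) powr p \<partial>M)
      \<le> (\<integral>x. 4 powr p * (\<bar>F x\<bar> powr p + \<bar>F x - G x\<bar> powr p) \<partial>M)"
    using le by (intro integral_mono[OF int bound_int]) auto
  also have "\<dots> \<le> 4 powr p * (a + b)"
    using F_int D_int F_le D_le by (simp add: add_mono)
  finally show sum_le: "(\<integral>x. (\<bar>F x\<bar> + \<bar>G x\<bar>) powr p \<partial>M) \<le> 4 powr p * (a + b)" .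
  have G_le: "\<bar>G x\<bar> powr p \<le> (\<bar>F x\<bar> + \<bar>G x\<bar>) powr p" for x
    using p by (intro powr_mono2) auto
  have "integrable M (\<lambda>x. \<bar>G x\<bar> powr p)"
    using G_le by (intro Bochner_Integration.integrable_bound[OF int]) auto
  then have "(\<integral>x. \<bar>G x\<bar> powr p \<partial>M) \<le> (\<integral>x. (\<bar>F x\<bar> + \<bar>G x\<bar>) powr p \<partial>M)"
    using G_le by (intro integral_mono[OF _ int]) auto
  then show "(\<integral>x. \<bar>G x\<bar> powr p \<partial>M) \<le> 4 powr p * (a + b)" using sum_le by linarith
qed

lemma integrable_prod_rpow_Lp:
  fixes r :: real and F :: "'i \<Rightarrow> 'a \<Rightarrow> real"
  assumes r: "0 < r" and B: "finite B" "r * card B \<le> 1"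
    and F_meas: "\<forall>j\<in>B. F j \<in> borel_measurable M"
    and F_int: "\<forall>j\<in>B. integrable M (\<lambda>x. \<bar>F j x\<bar> powr (1/r))"
    and f_meas: "f \<in> borel_measurable M" and f_nonneg: "\<forall>x\<in>space M. 0 \<le> f x" and f_int: "integrable M f"
  shows "integrable M (\<lambda>x. (\<Prod>j\<in>B. F j x) * rpow (f x) (1 - r * card B))"
proof -
  have F_nonneg: "0 \<le> (\<integral>x. \<bar>F j x\<bar> powr (1/r) \<partial>M)" for j
    by (intro integral_nonneg_AE AE_I2) simp
  have f_nonneg': "0 \<le> integral\<^sup>L M f"
    using f_nonneg by (intro integral_nonneg_AE AE_I2) auto
  have "integrable M (\<lambda>x. (\<Prod>j\<in>B. \<bar>F j x\<bar>) * rpow (f x) (1 - r * card B))"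
    by (rule integrable_prod_rpow_holder[where c = "\<lambda>j. (\<integral>x. \<bar>F j x\<bar> powr (1/r) \<partial>M) + 1"
          and b = "integral\<^sup>L M f + 1", OF r B _ _ _ _ _ f_meas f_nonneg f_int])
      (use F_meas F_int F_nonneg f_nonneg' in \<open>auto simp del: powr_one_eq_one intro!: add_nonneg_pos\<close>)
  then show ?thesis
  proof (rule Bochner_Integration.integrable_bound)
    show "(\<lambda>x. (\<Prod>j\<in>B. F j x) * rpow (f x) (1 - r * card B)) \<in> borel_measurable M"
      using F_meas f_meas by (intro borel_measurable_times borel_measurable_prod borel_measurable_rpow) auto
  qed (auto simp: abs_mult abs_prod)
qed

lemma (in finite_measure) integrable_prod_Lp:
  fixes r :: real and F :: "'i \<Rightarrow> 'a \<Rightarrow> real"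
  assumes r: "0 < r" and B: "finite B" "r * card B \<le> 1"
    and F_meas: "\<forall>j\<in>B. F j \<in> borel_measurable M"
    and F_int: "\<forall>j\<in>B. integrable M (\<lambda>x. \<bar>F j x\<bar> powr (1/r))"
  shows "integrable M (\<lambda>x. \<Prod>j\<in>B. F j x)"
  using integrable_prod_rpow_Lp[OF r B F_meas F_int, of "\<lambda>_. 1"] by simp

lemma integral_abs_diff_le_of_root_dist:
  fixes r d m :: real and f g :: "'a \<Rightarrow> real"
  assumes r: "0 < r" "r \<le> 1"
    and [measurable]: "f \<in> borel_measurable M" "g \<in> borel_measurable M"
    and f_nonneg: "\<forall>x\<in>space M. 0 \<le> f x" and g_nonneg: "\<forall>x\<in>space M. 0 \<le> g x"
    and f_int: "integrable M f" and g_int: "integrable M g"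
    and D_int: "integrable M (\<lambda>x. \<bar>f x powr r - g x powr r\<bar> powr (1/r))"
    and D_le: "(\<integral>x. \<bar>f x powr r - g x powr r\<bar> powr (1/r) \<partial>M) \<le> d powr (1/r)"
    and d: "0 < d" "d \<le> 1" and m: "integral\<^sup>L M f \<le> m" "0 \<le> m"
  shows "(\<integral>x. \<bar>f x - g x\<bar> \<partial>M) \<le> (1/r) * d * (4 powr (1/r) * (m + 1)) powr (1 - r)"
proof -
  \<comment> \<open>mean value bound \<open>|f - g| \<le> |f\<^sup>r - g\<^sup>r| (f\<^sup>r + g\<^sup>r)\<^sup>1\<^sup>/\<^sup>r\<^sup>-\<^sup>1 / r\<close>, then Hoelder with exponents \<open>1/r\<close>, \<open>1/(1 - r)\<close>\<close>
  define p where "p = 1 / r"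
  have p: "1 \<le> p" "p * r = 1" "p * (1 - r) = p - 1" using r by (auto simp: p_def field_simps)
  define X where "X j x = \<bar>f x powr r - g x powr r\<bar>" for j :: nat and x
  define Y where "Y x = (\<bar>f x powr r\<bar> + \<bar>g x powr r\<bar>) powr p" for x
  have root_f: "\<bar>f x powr r\<bar> powr p = f x" if "x \<in> space M" for x
    using f_nonneg that r by (simp add: p_def powr_powr)
  have F_int: "integrable M (\<lambda>x. \<bar>f x powr r\<bar> powr p)"
    and F_le: "(\<integral>x. \<bar>f x powr r\<bar> powr p \<partial>M) \<le> m"
    using f_int m root_f by (simp_all cong: Bochner_Integration.integrable_cong Bochner_Integration.integral_cong)
  have D_le': "(\<integral>x. \<bar>f x powr r - g x powr r\<bar> powr p \<partial>M) \<le> 1"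
    using D_le powr_le1[of p d] d p(1) r(1) unfolding p_def by linarith
  note Y_bounds = integrable_add_abs_powr integral_add_abs_powr_le
  note Y_bounds = Y_bounds[of p "\<lambda>x. f x powr r" M "\<lambda>x. g x powr r", OF _ _ _ F_int D_int[folded p_def] F_le D_le']
  have Y_int: "integrable M Y" and Y_le: "integral\<^sup>L M Y \<le> 4 powr p * (m + 1)"
    using Y_bounds p unfolding Y_def by auto
  have X_meas: "X j \<in> borel_measurable M" for j unfolding X_def by measurable
  have Y_meas: "Y \<in> borel_measurable M" unfolding Y_def by measurable
  have holder: "integrable M (\<lambda>x. X 0 x * rpow (Y x) (1 - r))"
    "(\<integral>x. X 0 x * rpow (Y x) (1 - r) \<partial>M) \<le> d * (4 powr p * (m + 1)) powr (1 - r)"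
    using integrable_prod_rpow_holder[of r "{0::nat}" X M "\<lambda>_. d powr p" Y "4 powr p * (m + 1)"]
      integral_prod_rpow_le_holder[of r "{0::nat}" X M "\<lambda>_. d powr p" Y "4 powr p * (m + 1)"]
      r d m X_meas Y_meas Y_int Y_le D_int D_le
    by (auto simp: X_def Y_def p_def powr_powr rpow_eq_powr)
  have pointwise: "\<bar>f x - g x\<bar> \<le> p * (X 0 x * rpow (Y x) (1 - r))" if x: "x \<in> space M" for x
  proof -
    have "\<bar>f x - g x\<bar> = \<bar>(f x powr r) powr p - (g x powr r) powr p\<bar>"
      using f_nonneg g_nonneg x r by (simp add: p_def powr_powr)
    also have "\<dots> \<le> p * X 0 x * (f x powr r + g x powr r) powr (p - 1)"
      unfolding X_def using p by (intro abs_powr_diff_le) auto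
    also have "(f x powr r + g x powr r) powr (p - 1) \<le> rpow (Y x) (1 - r)"
      using p by (cases "r = 1") (auto simp: Y_def rpow_def powr_powr)
    finally show ?thesis using p unfolding X_def by (simp add: mult_left_mono mult.assoc)
  qed
  have "(\<integral>x. \<bar>f x - g x\<bar> \<partial>M) \<le> (\<integral>x. p * (X 0 x * rpow (Y x) (1 - r)) \<partial>M)"
    using f_int g_int holder pointwise by (intro integral_mono) auto
  also have "\<dots> \<le> p * (d * (4 powr p * (m + 1)) powr (1 - r))"
    using holder p by simp
  finally show ?thesis by (simp add: p_def mult.assoc)
qed

lemma abs_prod_mult_diff_le:
  fixes a b :: "'i \<Rightarrow> real" and u v :: real
  assumes "finite B" "0 \<le> u"
  shows "\<bar>(\<Prod>j\<in>B. a j) * u - (\<Prod>j\<in>B. b j) * v\<bar>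
    \<le> (\<Sum>i\<in>B. \<bar>a i - b i\<bar> * (\<Prod>j\<in>B - {i}. \<bar>a j\<bar> + \<bar>b j\<bar>)) * u + (\<Prod>j\<in>B. \<bar>b j\<bar>) * \<bar>u - v\<bar>"
proof -
  have "(\<Prod>j\<in>B. a j) * u - (\<Prod>j\<in>B. b j) * v
      = ((\<Prod>j\<in>B. a j) - (\<Prod>j\<in>B. b j)) * u + (\<Prod>j\<in>B. b j) * (u - v)"
    by (simp add: algebra_simps)
  then have "\<bar>(\<Prod>j\<in>B. a j) * u - (\<Prod>j\<in>B. b j) * v\<bar>
      \<le> \<bar>(\<Prod>j\<in>B. a j) - (\<Prod>j\<in>B. b j)\<bar> * u + (\<Prod>j\<in>B. \<bar>b j\<bar>) * \<bar>u - v\<bar>"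
    using assms by (simp add: abs_mult abs_prod abs_triangle_ineq[THEN order_trans])
  then show ?thesis
    using abs_prod_diff_le[OF assms(1), of a b] assms(2) by (smt (verit) mult_right_mono)
qed

lemma abs_rpow_diff_le:
  assumes "0 \<le> u" "0 \<le> v" "0 \<le> s" "s \<le> 1"
  shows "\<bar>rpow u s - rpow v s\<bar> \<le> (if s = 0 then 0 else rpow \<bar>u - v\<bar> s)"
  using assms abs_powr_diff_le_powr[of u v s] by (simp add: rpow_def)

lemma
  fixes r d C m :: real and F G :: "'i \<Rightarrow> 'a \<Rightarrow> real"
  assumes r: "0 < r" and B: "finite B" "r * card B \<le> 1"
    and F_meas: "\<forall>j\<in>B. F j \<in> borel_measurable M" and G_meas: "\<forall>j\<in>B. G j \<in> borel_measurable M"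
    and D_int: "\<forall>j\<in>B. integrable M (\<lambda>x. \<bar>F j x - G j x\<bar> powr (1/r))"
    and D_le: "\<forall>j\<in>B. (\<integral>x. \<bar>F j x - G j x\<bar> powr (1/r) \<partial>M) \<le> d powr (1/r)" and d: "0 < d"
    and S_int: "\<forall>j\<in>B. integrable M (\<lambda>x. (\<bar>F j x\<bar> + \<bar>G j x\<bar>) powr (1/r))"
    and S_le: "\<forall>j\<in>B. (\<integral>x. (\<bar>F j x\<bar> + \<bar>G j x\<bar>) powr (1/r) \<partial>M) \<le> C" and C: "0 < C"
    and f_meas: "f \<in> borel_measurable M" and f_nonneg: "\<forall>x\<in>space M. 0 \<le> f x"
    and f_int: "integrable M f" and f_le: "integral\<^sup>L M f \<le> m" and m: "0 < m"
  defines "T x \<equiv> (\<Sum>i\<in>B. \<bar>F i x - G i x\<bar> * (\<Prod>j\<in>B - {i}. \<bar>F j x\<bar> + \<bar>G j x\<bar>))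
      * rpow (f x) (1 - r * card B)"
  shows integrable_prod_telescope: "integrable M T"
    and integral_prod_telescope_le:
      "integral\<^sup>L M T \<le> card B * (d * (C powr r) ^ (card B - 1) * rpow m (1 - r * card B))"
proof -
  define X where "X i j x = (if j = i then \<bar>F i x - G i x\<bar> else \<bar>F j x\<bar> + \<bar>G j x\<bar>)" for i j x
  define c :: "'i \<Rightarrow> 'i \<Rightarrow> real" where "c i j = (if j = i then d powr (1/r) else C)" for i j
  have prod_X: "(\<Prod>j\<in>B. X i j x) = \<bar>F i x - G i x\<bar> * (\<Prod>j\<in>B - {i}. \<bar>F j x\<bar> + \<bar>G j x\<bar>)"
    if "i \<in> B" for i x
  proof -
    have "(\<Prod>j\<in>B - {i}. X i j x) = (\<Prod>j\<in>B - {i}. \<bar>F j x\<bar> + \<bar>G j x\<bar>)"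
      by (intro prod.cong) (auto simp: X_def)
    then show ?thesis using that B by (simp add: prod.remove X_def)
  qed
  have prod_c: "(\<Prod>j\<in>B. c i j powr r) = d * (C powr r) ^ (card B - 1)" if "i \<in> B" for i
  proof -
    have "(\<Prod>j\<in>B - {i}. c i j powr r) = (\<Prod>j\<in>B - {i}. C powr r)"
      by (intro prod.cong) (auto simp: c_def)
    also have "\<dots> = (C powr r) ^ (card B - 1)"
      using that B by (simp add: card_Diff_singleton)
    finally have "(\<Prod>j\<in>B - {i}. c i j powr r) = (C powr r) ^ (card B - 1)" .
    then show ?thesis using that B d r by (simp add: prod.remove c_def powr_powr)
  qed
  have X_hyps: "\<forall>j\<in>B. X i j \<in> borel_measurable M" "\<forall>j\<in>B. \<forall>x\<in>space M. 0 \<le> X i j x"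
      "\<forall>j\<in>B. integrable M (\<lambda>x. X i j x powr (1/r))"
      "\<forall>j\<in>B. (\<integral>x. X i j x powr (1/r) \<partial>M) \<le> c i j" "\<forall>j\<in>B. 0 < c i j"
    if "i \<in> B" for i
  proof -
    have "X i j \<in> borel_measurable M \<and> (\<forall>x\<in>space M. 0 \<le> X i j x) \<and>
        integrable M (\<lambda>x. X i j x powr (1/r)) \<and> (\<integral>x. X i j x powr (1/r) \<partial>M) \<le> c i j \<and> 0 < c i j"
      if "j \<in> B" for j
      using \<open>i \<in> B\<close> that F_meas G_meas D_int D_le d S_int S_le C
      by (cases "j = i") (auto simp: X_def[abs_def] c_def intro!: borel_measurable_abs borel_measurable_diff borel_measurable_add)
    then show "\<forall>j\<in>B. X i j \<in> borel_measurable M" "\<forall>j\<in>B. \<forall>x\<in>space M. 0 \<le> X i j x"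
      "\<forall>j\<in>B. integrable M (\<lambda>x. X i j x powr (1/r))"
      "\<forall>j\<in>B. (\<integral>x. X i j x powr (1/r) \<partial>M) \<le> c i j" "\<forall>j\<in>B. 0 < c i j"
      by auto
  qed
  have holder: "integrable M (\<lambda>x. (\<Prod>j\<in>B. X i j x) * rpow (f x) (1 - r * card B))"
    "(\<integral>x. (\<Prod>j\<in>B. X i j x) * rpow (f x) (1 - r * card B) \<partial>M)
       \<le> (\<Prod>j\<in>B. c i j powr r) * rpow m (1 - r * card B)"
    if "i \<in> B" for i
    using integrable_prod_rpow_holder[OF r B X_hyps[OF that] f_meas f_nonneg f_int f_le m]
      integral_prod_rpow_le_holder[OF r B X_hyps[OF that] f_meas f_nonneg f_int f_le m] by auto
  have T_eq: "T x = (\<Sum>i\<in>B. (\<Prod>j\<in>B. X i j x) * rpow (f x) (1 - r * card B))" for x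
    unfolding T_def sum_distrib_right using prod_X by simp
  show "integrable M T"
    unfolding T_eq using holder(1) by auto
  have "integral\<^sup>L M T = (\<Sum>i\<in>B. \<integral>x. (\<Prod>j\<in>B. X i j x) * rpow (f x) (1 - r * card B) \<partial>M)"
    unfolding T_eq using holder(1) by (simp add: integral_sum)
  also have "\<dots> \<le> (\<Sum>i\<in>B. d * (C powr r) ^ (card B - 1) * rpow m (1 - r * card B))"
    using holder(2) prod_c by (intro sum_mono) auto
  finally show "integral\<^sup>L M T \<le> card B * (d * (C powr r) ^ (card B - 1) * rpow m (1 - r * card B))"
    by simp
qed

lemma
  fixes r C \<delta> :: real and f g :: "'a \<Rightarrow> real" and G :: "'i \<Rightarrow> 'a \<Rightarrow> real"
  assumes r: "0 < r" and B: "finite B" "r * card B \<le> 1"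
    and f_meas: "f \<in> borel_measurable M" and g_meas: "g \<in> borel_measurable M"
    and f_nonneg: "\<forall>x\<in>space M. 0 \<le> f x" and g_nonneg: "\<forall>x\<in>space M. 0 \<le> g x"
    and f_int: "integrable M f" and g_int: "integrable M g"
    and fg_le: "(\<integral>x. \<bar>f x - g x\<bar> \<partial>M) \<le> \<delta>" "0 < \<delta>"
    and G_meas: "\<forall>j\<in>B. G j \<in> borel_measurable M"
    and G_int: "\<forall>j\<in>B. integrable M (\<lambda>x. \<bar>G j x\<bar> powr (1/r))"
    and G_le: "\<forall>j\<in>B. (\<integral>x. \<bar>G j x\<bar> powr (1/r) \<partial>M) \<le> C" and C: "0 < C"
  defines "s \<equiv> 1 - r * card B"
    and "R x \<equiv> (\<Prod>j\<in>B. \<bar>G j x\<bar>) * \<bar>rpow (f x) (1 - r * card B) - rpow (g x) (1 - r * card B)\<bar>"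
  shows integrable_prod_abs_rpow_diff: "integrable M R"
    and integral_prod_abs_rpow_diff_le: "integral\<^sup>L M R \<le> (if s = 0 then 0 else (C powr r) ^ card B * \<delta> powr s)"
proof (atomize (full), cases "s = 0")
  case True
  then show "integrable M R \<and> integral\<^sup>L M R \<le> (if s = 0 then 0 else (C powr r) ^ card B * \<delta> powr s)"
    by (simp add: R_def[abs_def] s_def rpow_def)
next
  case False
  have R_meas: "R \<in> borel_measurable M"
    unfolding R_def using G_meas f_meas g_meas by (intro borel_measurable_times borel_measurable_prod) auto
  have R_le: "R x \<le> (\<Prod>j\<in>B. \<bar>G j x\<bar>) * rpow \<bar>f x - g x\<bar> s" if "x \<in> space M" for x
    using abs_rpow_diff_le[of "f x" "g x" s] f_nonneg g_nonneg that False B r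
    by (auto simp: R_def s_def intro!: mult_left_mono prod_nonneg)
  have "\<forall>j\<in>B. (\<lambda>x. \<bar>G j x\<bar>) \<in> borel_measurable M" using G_meas by auto
  then have holder: "integrable M (\<lambda>x. (\<Prod>j\<in>B. \<bar>G j x\<bar>) * rpow \<bar>f x - g x\<bar> s)"
    "(\<integral>x. (\<Prod>j\<in>B. \<bar>G j x\<bar>) * rpow \<bar>f x - g x\<bar> s \<partial>M) \<le> (C powr r) ^ card B * \<delta> powr s"
    using integrable_prod_rpow_holder[of r B "\<lambda>j x. \<bar>G j x\<bar>" M "\<lambda>_. C" "\<lambda>x. \<bar>f x - g x\<bar>" \<delta>]
      integral_prod_rpow_le_holder[of r B "\<lambda>j x. \<bar>G j x\<bar>" M "\<lambda>_. C" "\<lambda>x. \<bar>f x - g x\<bar>" \<delta>]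
      r B G_int G_le C f_meas g_meas f_int g_int fg_le False
    unfolding s_def by (auto simp: rpow_eq_powr)
  have R_nonneg: "0 \<le> R x" for x unfolding R_def by (intro mult_nonneg_nonneg prod_nonneg) auto
  have R_int: "integrable M R"
  proof (rule Bochner_Integration.integrable_bound[OF holder(1) R_meas])
    show "AE x in M. norm (R x) \<le> norm ((\<Prod>j\<in>B. \<bar>G j x\<bar>) * rpow \<bar>f x - g x\<bar> s)"
      using R_le R_nonneg by (intro AE_I2) (metis abs_of_nonneg abs_ge_self order_trans real_norm_def)
  qed
  have "integral\<^sup>L M R \<le> (\<integral>x. (\<Prod>j\<in>B. \<bar>G j x\<bar>) * rpow \<bar>f x - g x\<bar> s \<partial>M)"
    using R_le by (intro integral_mono[OF R_int holder(1)]) auto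
  then show "integrable M R \<and> integral\<^sup>L M R \<le> (if s = 0 then 0 else (C powr r) ^ card B * \<delta> powr s)"
    using R_int holder(2) False by simp
qed

lemma abs_integral_prod_rpow_diff_le:
  fixes r m \<delta> d a :: real and f g :: "'a \<Rightarrow> real" and F G :: "'i \<Rightarrow> 'a \<Rightarrow> real"
  assumes r: "0 < r" "r \<le> 1" and B: "finite B" "r * card B \<le> 1"
    and f_meas: "f \<in> borel_measurable M" and g_meas: "g \<in> borel_measurable M"
    and f_nonneg: "\<forall>x\<in>space M. 0 \<le> f x" and g_nonneg: "\<forall>x\<in>space M. 0 \<le> g x"
    and f_int: "integrable M f" and g_int: "integrable M g"
    and f_le: "integral\<^sup>L M f \<le> m" "0 \<le> m"
    and fg_le: "(\<integral>x. \<bar>f x - g x\<bar> \<partial>M) \<le> \<delta>" "0 < \<delta>"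
    and F_meas: "\<forall>j\<in>B. F j \<in> borel_measurable M" and G_meas: "\<forall>j\<in>B. G j \<in> borel_measurable M"
    and F_int: "\<forall>j\<in>B. integrable M (\<lambda>x. \<bar>F j x\<bar> powr (1/r))"
    and G_int: "\<forall>j\<in>B. integrable M (\<lambda>x. \<bar>G j x\<bar> powr (1/r))"
    and F_le: "\<forall>j\<in>B. (\<integral>x. \<bar>F j x\<bar> powr (1/r) \<partial>M) \<le> a" "0 \<le> a"
    and FG_le: "\<forall>j\<in>B. (\<integral>x. \<bar>F j x - G j x\<bar> powr (1/r) \<partial>M) \<le> d powr (1/r)"
    and d: "0 < d" "d \<le> 1"
  defines "s \<equiv> 1 - r * card B" and "\<Lambda> \<equiv> (4 powr (1/r) * (a + 1)) powr r"
  shows "\<bar>(\<integral>x. (\<Prod>j\<in>B. F j x) * rpow (f x) s \<partial>M) - (\<integral>x. (\<Prod>j\<in>B. G j x) * rpow (g x) s \<partial>M)\<bar>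
    \<le> card B * (d * \<Lambda> ^ (card B - 1) * rpow (m + 1) s) + (if s = 0 then 0 else \<Lambda> ^ card B * \<delta> powr s)"
proof -
  \<comment> \<open>Telescoping leaves terms with one factor \<open>F i - G i\<close> and the others \<open>|F j| + |G j|\<close>, plus
    \<open>(\<Prod>j. G j) (f\<^sup>s - g\<^sup>s)\<close> with \<open>|f\<^sup>s - g\<^sup>s| \<le> |f - g|\<^sup>s\<close>; each is bounded by Hoelder.\<close>
  define C where "C = 4 powr (1/r) * (a + 1)"
  have C: "0 < C" "\<Lambda> = C powr r" using F_le(2) unfolding C_def \<Lambda>_def by auto
  have s: "0 \<le> s" "s \<le> 1" using B r unfolding s_def by auto
  have D_int: "\<forall>j\<in>B. integrable M (\<lambda>x. \<bar>F j x - G j x\<bar> powr (1/r))"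
    using F_meas G_meas F_int G_int r by (auto intro: integrable_abs_diff_powr)
  have FG_le1: "\<forall>j\<in>B. (\<integral>x. \<bar>F j x - G j x\<bar> powr (1/r) \<partial>M) \<le> 1"
    using FG_le powr_le1[of "1/r" d] d r by force
  have S_int: "\<forall>j\<in>B. integrable M (\<lambda>x. (\<bar>F j x\<bar> + \<bar>G j x\<bar>) powr (1/r))"
    and S_le: "\<forall>j\<in>B. (\<integral>x. (\<bar>F j x\<bar> + \<bar>G j x\<bar>) powr (1/r) \<partial>M) \<le> C"
    and G_le: "\<forall>j\<in>B. (\<integral>x. \<bar>G j x\<bar> powr (1/r) \<partial>M) \<le> C"
    using integrable_add_abs_powr[of "1/r" "F j" M "G j" a 1 for j]
      integral_add_abs_powr_le[of "1/r" "F j" M "G j" a 1 for j]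
      integral_abs_powr_le_of_diff[of "1/r" "F j" M "G j" a 1 for j]
      r F_meas G_meas F_int D_int F_le FG_le1
    unfolding C_def by auto
  define T where "T x = (\<Sum>i\<in>B. \<bar>F i x - G i x\<bar> * (\<Prod>j\<in>B - {i}. \<bar>F j x\<bar> + \<bar>G j x\<bar>)) * rpow (f x) s"
    for x
  have f_le1: "integral\<^sup>L M f \<le> m + 1" "0 < m + 1" using f_le by auto
  note telescope = integrable_prod_telescope integral_prod_telescope_le
  note telescope = telescope[OF r(1) B F_meas G_meas D_int FG_le d(1) S_int S_le C(1)
      f_meas f_nonneg f_int f_le1, folded s_def C(2)]
  have T_int: "integrable M T"
    and T_le: "integral\<^sup>L M T \<le> card B * (d * \<Lambda> ^ (card B - 1) * rpow (m + 1) s)"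
    using telescope unfolding T_def[abs_def] by auto
  define R where "R x = (\<Prod>j\<in>B. \<bar>G j x\<bar>) * \<bar>rpow (f x) s - rpow (g x) s\<bar>" for x
  note R = integrable_prod_abs_rpow_diff integral_prod_abs_rpow_diff_le
  note R = R[OF r(1) B f_meas g_meas f_nonneg g_nonneg f_int g_int fg_le G_meas G_int G_le C(1),
      folded s_def C(2)]
  have R_int: "integrable M R"
    and R_le: "integral\<^sup>L M R \<le> (if s = 0 then 0 else \<Lambda> ^ card B * \<delta> powr s)"
    using R unfolding R_def[abs_def] by auto
  have F_prod_int: "integrable M (\<lambda>x. (\<Prod>j\<in>B. F j x) * rpow (f x) s)"
    and G_prod_int: "integrable M (\<lambda>x. (\<Prod>j\<in>B. G j x) * rpow (g x) s)"
    unfolding s_def using r B F_meas F_int G_meas G_int f_meas f_nonneg f_int g_meas g_nonneg g_int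
    by (auto intro!: integrable_prod_rpow_Lp)
  have pointwise: "\<bar>(\<Prod>j\<in>B. F j x) * rpow (f x) s - (\<Prod>j\<in>B. G j x) * rpow (g x) s\<bar> \<le> T x + R x" for x
    using abs_prod_mult_diff_le[OF B(1), of "rpow (f x) s" "\<lambda>j. F j x" "\<lambda>j. G j x" "rpow (g x) s"]
    unfolding T_def R_def by simp
  have "\<bar>(\<integral>x. (\<Prod>j\<in>B. F j x) * rpow (f x) s \<partial>M) - (\<integral>x. (\<Prod>j\<in>B. G j x) * rpow (g x) s \<partial>M)\<bar>
      \<le> (\<integral>x. \<bar>(\<Prod>j\<in>B. F j x) * rpow (f x) s - (\<Prod>j\<in>B. G j x) * rpow (g x) s\<bar> \<partial>M)"
    using F_prod_int G_prod_int by (simp flip: Bochner_Integration.integral_diff)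
  also have "\<dots> \<le> (\<integral>x. T x + R x \<partial>M)"
    using F_prod_int G_prod_int T_int R_int pointwise by (intro integral_mono) auto
  also have "\<dots> = integral\<^sup>L M T + integral\<^sup>L M R"
    using T_int R_int by simp
  finally show ?thesis using T_le R_le by simp
qed

section \<open>Densities with respect to the dominating measure\<close>

lemma
  assumes sets: "sets \<nu> = sets \<mu>" and fin: "finite_measure \<mu>" "finite_measure \<nu>"
  shows sets_dom_sum [simp]: "sets (dom_sum \<mu> \<nu>) = sets \<mu>"
    and emeasure_dom_sum: "A \<in> sets \<mu> \<Longrightarrow> emeasure (dom_sum \<mu> \<nu>) A = emeasure \<mu> A + emeasure \<nu> A"
    and finite_measure_dom_sum: "finite_measure (dom_sum \<mu> \<nu>)"
proof -
  have pos: "positive (sets \<mu>) (\<lambda>A. emeasure \<mu> A + emeasure \<nu> A)" by (simp add: positive_def)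
  have ca: "countably_additive (sets \<mu>) (\<lambda>A. emeasure \<mu> A + emeasure \<nu> A)"
  proof (rule countably_additiveI)
    fix A :: "nat \<Rightarrow> _" assume A: "range A \<subseteq> sets \<mu>" "disjoint_family A" "\<Union> (range A) \<in> sets \<mu>"
    have "(\<Sum>i. emeasure \<mu> (A i) + emeasure \<nu> (A i)) = (\<Sum>i. emeasure \<mu> (A i)) + (\<Sum>i. emeasure \<nu> (A i))"
      by (rule suminf_add[symmetric]) auto
    also have "\<dots> = emeasure \<mu> (\<Union> (range A)) + emeasure \<nu> (\<Union> (range A))"
      using A sets by (simp add: suminf_emeasure)
    finally show "(\<Sum>i. emeasure \<mu> (A i) + emeasure \<nu> (A i)) = emeasure \<mu> (\<Union> (range A)) + emeasure \<nu> (\<Union> (range A))" .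
  qed
  show sets_eq: "sets (dom_sum \<mu> \<nu>) = sets \<mu>"
    unfolding dom_sum_def by (simp add: sets.sigma_sets_eq)
  show em: "emeasure (dom_sum \<mu> \<nu>) A = emeasure \<mu> A + emeasure \<nu> A" if "A \<in> sets \<mu>" for A
    unfolding dom_sum_def using that by (intro emeasure_measure_of_sigma[OF sets.sigma_algebra_axioms pos ca])
  show "finite_measure (dom_sum \<mu> \<nu>)"
  proof (rule finite_measureI)
    have "space (dom_sum \<mu> \<nu>) = space \<mu>" using sets_eq by (rule sets_eq_imp_space_eq)
    then show "emeasure (dom_sum \<mu> \<nu>) (space (dom_sum \<mu> \<nu>)) \<noteq> \<infinity>"
      using em[of "space \<mu>"] fin sets_eq_imp_space_eq[OF sets]
      by (simp add: finite_measure.emeasure_finite)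
  qed
qed

lemma
  assumes sets: "sets \<nu> = sets \<mu>" and fin: "finite_measure \<mu>" "finite_measure \<nu>"
  shows absolutely_continuous_dom_sum_left: "absolutely_continuous (dom_sum \<mu> \<nu>) \<mu>"
    and absolutely_continuous_dom_sum_right: "absolutely_continuous (dom_sum \<mu> \<nu>) \<nu>"
  using emeasure_dom_sum[OF assms] sets_dom_sum[OF assms] sets
  by (auto simp: absolutely_continuous_def null_sets_def)

context finite_measure
begin

lemma
  assumes ac: "absolutely_continuous M N" "sets N = sets M" and fin: "finite_measure N"
  shows integrable_enn2real_RN_deriv: "integrable M (\<lambda>x. enn2real (RN_deriv M N x))"
    and measure_space_eq_integral_RN_deriv:
      "measure N (space N) = (\<integral>x. enn2real (RN_deriv M N x) \<partial>M)"
proof -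
  interpret N: finite_measure N by fact
  have sf: "sigma_finite_measure N" by unfold_locales
  show "integrable M (\<lambda>x. enn2real (RN_deriv M N x))"
    using RN_deriv_integrable[OF sf ac, of "\<lambda>_. 1"] by simp
  show "measure N (space N) = (\<integral>x. enn2real (RN_deriv M N x) \<partial>M)"
    using RN_deriv_integral[OF sf ac, of "\<lambda>_. 1"] by simp
qed

lemma
  fixes r :: real
  assumes ac: "absolutely_continuous M N" "sets N = sets M" and fin: "finite_measure N"
    and r: "0 < r" and \<phi>: "Lr_dens r N \<phi>"
  shows borel_measurable_Lr_dens_RN_deriv:
      "(\<lambda>x. \<phi> x * enn2real (RN_deriv M N x) powr r) \<in> borel_measurable M"
    and integrable_Lr_dens_RN_deriv:
      "integrable M (\<lambda>x. \<bar>\<phi> x * enn2real (RN_deriv M N x) powr r\<bar> powr (1/r))"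
    and integral_Lr_dens_RN_deriv:
      "(\<integral>x. \<bar>\<phi> x * enn2real (RN_deriv M N x) powr r\<bar> powr (1/r) \<partial>M) = (\<integral>x. \<bar>\<phi> x\<bar> powr (1/r) \<partial>N)"
proof -
  interpret N: finite_measure N by fact
  have sf: "sigma_finite_measure N" by unfold_locales
  have \<phi>_meas [measurable]: "\<phi> \<in> borel_measurable M"
    using \<phi> measurable_cong_sets[OF ac(2) refl] by (auto simp: Lr_dens_def)
  have eq: "\<bar>\<phi> x * enn2real (RN_deriv M N x) powr r\<bar> powr (1/r)
      = enn2real (RN_deriv M N x) * \<bar>\<phi> x\<bar> powr (1/r)" for x
    using r by (simp add: abs_mult powr_mult powr_powr)
  show "(\<lambda>x. \<phi> x * enn2real (RN_deriv M N x) powr r) \<in> borel_measurable M" by measurable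
  show "integrable M (\<lambda>x. \<bar>\<phi> x * enn2real (RN_deriv M N x) powr r\<bar> powr (1/r))"
    using \<phi> RN_deriv_integrable[OF sf ac, of "\<lambda>x. \<bar>\<phi> x\<bar> powr (1/r)"]
    unfolding eq by (simp add: Lr_dens_def)
  show "(\<integral>x. \<bar>\<phi> x * enn2real (RN_deriv M N x) powr r\<bar> powr (1/r) \<partial>M)
      = (\<integral>x. \<bar>\<phi> x\<bar> powr (1/r) \<partial>N)"
    using RN_deriv_integral[OF sf ac, of "\<lambda>x. \<bar>\<phi> x\<bar> powr (1/r)"] unfolding eq by simp
qed

end

lemma mult_prod_eq_prod_mult_powr_rpow:
  fixes r x :: real and v :: "'i \<Rightarrow> real"
  assumes "finite B" "0 \<le> x" "r * card B \<le> 1"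
  shows "x * (\<Prod>j\<in>B. v j) = (\<Prod>j\<in>B. v j * x powr r) * rpow x (1 - r * card B)"
proof (cases "x = 0")
  case True
  then show ?thesis using assms by (cases "B = {}") (auto simp: rpow_def prod.distrib)
next
  case False
  then have "x powr (r * card B) * rpow x (1 - r * card B) = x"
    using assms by (auto simp: rpow_def powr_add[symmetric])
  then show ?thesis
    using False assms by (simp add: prod.distrib powr_realpow[symmetric] powr_powr mult.commute)
qed

definition Sr_mass_modulus :: "real \<Rightarrow> 'a measure \<Rightarrow> real" where
  "Sr_mass_modulus r \<mu> = (1/r) * (4 powr (1/r) * (measure \<mu> (space \<mu>) + 1)) powr (1 - r)"

lemma Sr_mass_modulus_pos: "0 < r \<Longrightarrow> 0 < Sr_mass_modulus r \<mu>"
proof -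
  assume "0 < r"
  moreover have "0 < measure \<mu> (space \<mu>) + 1" using measure_nonneg[of \<mu> "space \<mu>"] by linarith
  ultimately show ?thesis unfolding Sr_mass_modulus_def by simp
qed

locale Mr_pair =
  fixes r :: real and \<Omega> \<mu> \<nu> :: "'a measure"
  assumes r_pos: "0 < r" and Mr_\<mu>: "Mr_point \<Omega> \<mu>" and Mr_\<nu>: "Mr_point \<Omega> \<nu>"
begin

abbreviation \<rho> where "\<rho> \<equiv> dom_sum \<mu> \<nu>"
abbreviation f where "f x \<equiv> enn2real (RN_deriv \<rho> \<mu> x)"
abbreviation g where "g x \<equiv> enn2real (RN_deriv \<rho> \<nu> x)"

lemma sets_\<mu>: "sets \<mu> = sets \<Omega>" and sets_\<nu>: "sets \<nu> = sets \<mu>"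
  and fin_\<mu>: "finite_measure \<mu>" and fin_\<nu>: "finite_measure \<nu>"
  using Mr_\<mu> Mr_\<nu> by (auto simp: Mr_point_def)

lemma sets_\<rho>: "sets \<rho> = sets \<Omega>"
  using sets_\<mu> sets_\<nu> fin_\<mu> fin_\<nu> by simp

sublocale \<rho>: finite_measure \<rho>
  using finite_measure_dom_sum[OF sets_\<nu> fin_\<mu> fin_\<nu>] .

lemma ac_\<mu>: "absolutely_continuous \<rho> \<mu>" and ac_\<nu>: "absolutely_continuous \<rho> \<nu>"
  and sets_\<mu>_\<rho>: "sets \<mu> = sets \<rho>" and sets_\<nu>_\<rho>: "sets \<nu> = sets \<rho>"
  using absolutely_continuous_dom_sum_left[OF sets_\<nu> fin_\<mu> fin_\<nu>]
    absolutely_continuous_dom_sum_right[OF sets_\<nu> fin_\<mu> fin_\<nu>] sets_\<rho> sets_\<mu> sets_\<nu> by auto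

lemma f_meas [measurable]: "f \<in> borel_measurable \<rho>" and g_meas [measurable]: "g \<in> borel_measurable \<rho>"
  by measurable

lemma f_int: "integrable \<rho> f" and g_int: "integrable \<rho> g"
  and mass_\<mu>: "measure \<mu> (space \<mu>) = integral\<^sup>L \<rho> f" and mass_\<nu>: "measure \<nu> (space \<nu>) = integral\<^sup>L \<rho> g"
  using \<rho>.integrable_enn2real_RN_deriv[OF ac_\<mu> sets_\<mu>_\<rho> fin_\<mu>]
    \<rho>.integrable_enn2real_RN_deriv[OF ac_\<nu> sets_\<nu>_\<rho> fin_\<nu>]
    \<rho>.measure_space_eq_integral_RN_deriv[OF ac_\<mu> sets_\<mu>_\<rho> fin_\<mu>]
    \<rho>.measure_space_eq_integral_RN_deriv[OF ac_\<nu> sets_\<nu>_\<rho> fin_\<nu>] by auto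

lemma integral_\<mu>: "h \<in> borel_measurable \<Omega> \<Longrightarrow> integral\<^sup>L \<mu> h = (\<integral>x. f x * h x \<partial>\<rho>)"
  and integral_\<nu>: "h \<in> borel_measurable \<Omega> \<Longrightarrow> integral\<^sup>L \<nu> h = (\<integral>x. g x * h x \<partial>\<rho>)"
  using \<rho>.RN_deriv_integral[OF _ ac_\<mu> sets_\<mu>_\<rho>, of h] \<rho>.RN_deriv_integral[OF _ ac_\<nu> sets_\<nu>_\<rho>, of h]
    fin_\<mu> fin_\<nu> measurable_cong_sets[OF sets_\<rho> refl]
  by (auto intro: finite_measure.sigma_finite_measure)

lemmas Lr_\<mu> = \<rho>.borel_measurable_Lr_dens_RN_deriv[OF ac_\<mu> sets_\<mu>_\<rho> fin_\<mu> r_pos]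
  \<rho>.integrable_Lr_dens_RN_deriv[OF ac_\<mu> sets_\<mu>_\<rho> fin_\<mu> r_pos]
  \<rho>.integral_Lr_dens_RN_deriv[OF ac_\<mu> sets_\<mu>_\<rho> fin_\<mu> r_pos]

lemmas Lr_\<nu> = \<rho>.borel_measurable_Lr_dens_RN_deriv[OF ac_\<nu> sets_\<nu>_\<rho> fin_\<nu> r_pos]
  \<rho>.integrable_Lr_dens_RN_deriv[OF ac_\<nu> sets_\<nu>_\<rho> fin_\<nu> r_pos]
  \<rho>.integral_Lr_dens_RN_deriv[OF ac_\<nu> sets_\<nu>_\<rho> fin_\<nu> r_pos]

lemma integral_le_of_Sr_dist_less:
  assumes "Sr_dist r \<mu> \<phi> \<nu> \<psi> < d"
  shows "(\<integral>x. \<bar>\<phi> x * f x powr r - \<psi> x * g x powr r\<bar> powr (1/r) \<partial>\<rho>) \<le> d powr (1/r)"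
proof -
  let ?I = "\<integral>x. \<bar>\<phi> x * f x powr r - \<psi> x * g x powr r\<bar> powr (1/r) \<partial>\<rho>"
  have "?I powr r < d" using assms by (simp add: Sr_dist_def Let_def)
  moreover have "0 \<le> ?I" by (intro integral_nonneg_AE AE_I2) simp
  ultimately have "(?I powr r) powr (1/r) \<le> d powr (1/r)" using r_pos by (intro powr_mono2) auto
  then show ?thesis using r_pos \<open>0 \<le> ?I\<close> by (simp add: powr_powr)
qed

lemma Lr_dens_one: "Lr_dens r \<mu> (\<lambda>_. 1)" "Lr_dens r \<nu> (\<lambda>_. 1)"
  using fin_\<mu> fin_\<nu> by (auto simp: Lr_dens_def finite_measure.integrable_const)

lemma
  assumes "r \<le> 1" and dist: "Sr_dist r \<mu> (\<lambda>_. 1) \<nu> (\<lambda>_. 1) < d" and d: "0 < d" "d \<le> 1"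
  shows L1_dist_le_Sr_dist: "(\<integral>x. \<bar>f x - g x\<bar> \<partial>\<rho>) \<le> Sr_mass_modulus r \<mu> * d"
    and mass_diff_le_Sr_dist: "\<bar>measure \<nu> (space \<nu>) - measure \<mu> (space \<mu>)\<bar> \<le> Sr_mass_modulus r \<mu> * d"
proof -
  have D_int: "integrable \<rho> (\<lambda>x. \<bar>f x powr r - g x powr r\<bar> powr (1/r))"
    using Lr_\<mu>(1,2)[OF Lr_dens_one(1)] Lr_\<nu>(1,2)[OF Lr_dens_one(2)] r_pos
    by (intro integrable_abs_diff_powr) auto
  have "(\<integral>x. \<bar>f x - g x\<bar> \<partial>\<rho>) \<le> (1/r) * d * (4 powr (1/r) * (measure \<mu> (space \<mu>) + 1)) powr (1 - r)"
    using integral_le_of_Sr_dist_less[OF dist] r_pos \<open>r \<le> 1\<close> d f_int g_int D_int mass_\<mu>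
    by (intro integral_abs_diff_le_of_root_dist) auto
  then show L1: "(\<integral>x. \<bar>f x - g x\<bar> \<partial>\<rho>) \<le> Sr_mass_modulus r \<mu> * d"
    by (simp add: Sr_mass_modulus_def algebra_simps)
  have "\<bar>measure \<nu> (space \<nu>) - measure \<mu> (space \<mu>)\<bar> = \<bar>\<integral>x. g x - f x \<partial>\<rho>\<bar>"
    using mass_\<mu> mass_\<nu> f_int g_int by simp
  also have "\<dots> \<le> (\<integral>x. \<bar>f x - g x\<bar> \<partial>\<rho>)"
    using integral_abs_bound[of \<rho> "\<lambda>x. g x - f x"] by (simp add: abs_minus_commute)
  finally show "\<bar>measure \<nu> (space \<nu>) - measure \<mu> (space \<mu>)\<bar> \<le> Sr_mass_modulus r \<mu> * d"
    using L1 by linarith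
qed

lemma Lr_dens_borel_measurable: "Lr_dens r \<mu> \<phi> \<Longrightarrow> \<phi> \<in> borel_measurable \<Omega>"
  "Lr_dens r \<nu> \<phi> \<Longrightarrow> \<phi> \<in> borel_measurable \<Omega>"
  using measurable_cong_sets[OF sets_\<mu> refl] measurable_cong_sets[OF trans[OF sets_\<nu> sets_\<mu>] refl]
  by (auto simp: Lr_dens_def)

lemma integral_prod_\<mu>_eq_rpow:
  fixes V :: "'i \<Rightarrow> 'a \<Rightarrow> real"
  assumes B: "finite B" "r * card B \<le> 1" and V: "\<forall>j\<in>B. Lr_dens r \<mu> (V j)"
  shows "(\<integral>x. (\<Prod>j\<in>B. V j x) \<partial>\<mu>)
    = (\<integral>x. (\<Prod>j\<in>B. V j x * f x powr r) * rpow (f x) (1 - r * card B) \<partial>\<rho>)"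
  using V Lr_dens_borel_measurable(1)
  by (simp add: integral_\<mu> borel_measurable_prod mult_prod_eq_prod_mult_powr_rpow[OF B(1) _ B(2)])

lemma integral_prod_\<nu>_eq_rpow:
  fixes W :: "'i \<Rightarrow> 'a \<Rightarrow> real"
  assumes B: "finite B" "r * card B \<le> 1" and W: "\<forall>j\<in>B. Lr_dens r \<nu> (W j)"
  shows "(\<integral>x. (\<Prod>j\<in>B. W j x) \<partial>\<nu>)
    = (\<integral>x. (\<Prod>j\<in>B. W j x * g x powr r) * rpow (g x) (1 - r * card B) \<partial>\<rho>)"
  using W Lr_dens_borel_measurable(2)
  by (simp add: integral_\<nu> borel_measurable_prod mult_prod_eq_prod_mult_powr_rpow[OF B(1) _ B(2)])

lemma abs_integral_prod_diff_le:
  fixes V W :: "'i \<Rightarrow> 'a \<Rightarrow> real"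
  assumes "r \<le> 1" and B: "finite B" "r * card B \<le> 1"
    and V: "\<forall>j\<in>B. Lr_dens r \<mu> (V j)" and W: "\<forall>j\<in>B. Lr_dens r \<nu> (W j)"
    and a: "\<forall>j\<in>B. (\<integral>x. \<bar>V j x\<bar> powr (1/r) \<partial>\<mu>) \<le> a" "0 \<le> a"
    and dist: "Sr_dist r \<mu> (\<lambda>_. 1) \<nu> (\<lambda>_. 1) < d" "\<forall>j\<in>B. Sr_dist r \<mu> (V j) \<nu> (W j) < d"
    and d: "0 < d" "d \<le> 1"
  defines "s \<equiv> 1 - r * card B" and "\<Lambda> \<equiv> (4 powr (1/r) * (a + 1)) powr r"
    and "K \<equiv> Sr_mass_modulus r \<mu>"
  shows "\<bar>(\<integral>x. (\<Prod>j\<in>B. W j x) \<partial>\<nu>) - (\<integral>x. (\<Prod>j\<in>B. V j x) \<partial>\<mu>)\<bar>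
    \<le> card B * (d * \<Lambda> ^ (card B - 1) * rpow (measure \<mu> (space \<mu>) + 1) s)
      + (if s = 0 then 0 else \<Lambda> ^ card B * (K * d) powr s)"
proof -
  have fg_le: "(\<integral>x. \<bar>f x - g x\<bar> \<partial>\<rho>) \<le> K * d" "0 < K * d"
    using L1_dist_le_Sr_dist[OF \<open>r \<le> 1\<close> dist(1) d] Sr_mass_modulus_pos[OF r_pos, of \<mu>] d
    unfolding K_def by auto
  have F_le: "\<forall>j\<in>B. (\<integral>x. \<bar>V j x * f x powr r\<bar> powr (1/r) \<partial>\<rho>) \<le> a"
    using Lr_\<mu>(3) V a by auto
  have FG_le: "\<forall>j\<in>B. (\<integral>x. \<bar>V j x * f x powr r - W j x * g x powr r\<bar> powr (1/r) \<partial>\<rho>) \<le> d powr (1/r)"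
    using integral_le_of_Sr_dist_less dist(2) by blast
  have "\<bar>(\<integral>x. (\<Prod>j\<in>B. V j x * f x powr r) * rpow (f x) s \<partial>\<rho>)
      - (\<integral>x. (\<Prod>j\<in>B. W j x * g x powr r) * rpow (g x) s \<partial>\<rho>)\<bar>
    \<le> card B * (d * \<Lambda> ^ (card B - 1) * rpow (measure \<mu> (space \<mu>) + 1) s)
      + (if s = 0 then 0 else \<Lambda> ^ card B * (K * d) powr s)"
    unfolding s_def \<Lambda>_def
    by (rule abs_integral_prod_rpow_diff_le[OF r_pos \<open>r \<le> 1\<close> B f_meas g_meas _ _ f_int g_int
          _ _ fg_le _ _ _ _ F_le a(2) FG_le d])
      (use mass_\<mu> V W Lr_\<mu>(1,2) Lr_\<nu>(1,2) in auto)
  then show ?thesis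
    unfolding s_def integral_prod_\<mu>_eq_rpow[OF B V] integral_prod_\<nu>_eq_rpow[OF B W]
    by (simp add: abs_minus_commute)
qed

end

section \<open>Linear combinations of canonical tensors are tensor fields\<close>

definition Sr_nhds :: "real \<Rightarrow> nat \<Rightarrow> ('a measure \<Rightarrow> bool) \<Rightarrow> ('a measure \<Rightarrow> ('a \<Rightarrow> real) \<Rightarrow> bool)
    \<Rightarrow> 'a measure \<Rightarrow> (nat \<Rightarrow> 'a \<Rightarrow> real) \<Rightarrow> ('a measure \<times> (nat \<Rightarrow> 'a \<Rightarrow> real)) filter" where
  "Sr_nhds r n Pt T \<mu> V = (INF d\<in>{0<..}. principal {(\<nu>, W). Pt \<nu> \<and> (\<forall>j\<in>{1..n}. T \<nu> (W j))
      \<and> Sr_dist r \<mu> (\<lambda>_. 1) \<nu> (\<lambda>_. 1) < d \<and> (\<forall>j\<in>{1..n}. Sr_dist r \<mu> (V j) \<nu> (W j) < d)})"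

lemma eventually_Sr_nhds:
  "eventually P (Sr_nhds r n Pt T \<mu> V) \<longleftrightarrow>
    (\<exists>d>0. \<forall>\<nu> W. Pt \<nu> \<and> (\<forall>j\<in>{1..n}. T \<nu> (W j))
      \<and> Sr_dist r \<mu> (\<lambda>_. 1) \<nu> (\<lambda>_. 1) < d \<and> (\<forall>j\<in>{1..n}. Sr_dist r \<mu> (V j) \<nu> (W j) < d) \<longrightarrow> P (\<nu>, W))"
  unfolding Sr_nhds_def
proof (subst eventually_INF_base)
  fix a b :: real assume "a \<in> {0<..}" "b \<in> {0<..}"
  then show "\<exists>x\<in>{0<..}. principal {(\<nu>, W). Pt \<nu> \<and> (\<forall>j\<in>{1..n}. T \<nu> (W j))
      \<and> Sr_dist r \<mu> (\<lambda>_. 1) \<nu> (\<lambda>_. 1) < x \<and> (\<forall>j\<in>{1..n}. Sr_dist r \<mu> (V j) \<nu> (W j) < x)}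
    \<le> inf (principal {(\<nu>, W). Pt \<nu> \<and> (\<forall>j\<in>{1..n}. T \<nu> (W j))
      \<and> Sr_dist r \<mu> (\<lambda>_. 1) \<nu> (\<lambda>_. 1) < a \<and> (\<forall>j\<in>{1..n}. Sr_dist r \<mu> (V j) \<nu> (W j) < a)})
     (principal {(\<nu>, W). Pt \<nu> \<and> (\<forall>j\<in>{1..n}. T \<nu> (W j))
      \<and> Sr_dist r \<mu> (\<lambda>_. 1) \<nu> (\<lambda>_. 1) < b \<and> (\<forall>j\<in>{1..n}. Sr_dist r \<mu> (V j) \<nu> (W j) < b)})"
    by (intro bexI[of _ "min a b"]) auto
qed (auto simp: eventually_principal)

lemma tensor_fieldI:
  assumes "\<And>\<mu> V W. Pt \<mu> \<Longrightarrow> \<forall>j\<in>{1..n}. T \<mu> (V j) \<and> T \<mu> (W j) \<and> (AE x in \<mu>. V j x = W j x)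
      \<Longrightarrow> \<Theta> \<mu> V = \<Theta> \<mu> W"
    and "\<And>\<mu> V i \<psi> c. Pt \<mu> \<Longrightarrow> \<forall>j\<in>{1..n}. T \<mu> (V j) \<Longrightarrow> i \<in> {1..n} \<Longrightarrow> T \<mu> \<psi>
      \<Longrightarrow> \<Theta> \<mu> (V(i := (\<lambda>x. c * V i x + \<psi> x))) = c * \<Theta> \<mu> V + \<Theta> \<mu> (V(i := \<psi>))"
    and "\<And>\<mu> V. Pt \<mu> \<Longrightarrow> \<forall>j\<in>{1..n}. T \<mu> (V j)
      \<Longrightarrow> ((\<lambda>(\<nu>, W). \<Theta> \<nu> W) \<longlongrightarrow> \<Theta> \<mu> V) (Sr_nhds r n Pt T \<mu> V)"
  shows "tensor_field r n Pt T \<Theta>"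
  unfolding tensor_field_def
proof (intro conjI allI impI)
  fix \<mu> V and e :: real
  assume "Pt \<mu> \<and> (\<forall>j\<in>{1..n}. T \<mu> (V j))" and "0 < e"
  then have "eventually (\<lambda>z. dist ((\<lambda>(\<nu>, W). \<Theta> \<nu> W) z) (\<Theta> \<mu> V) < e) (Sr_nhds r n Pt T \<mu> V)"
    using assms(3) by (auto intro: tendstoD)
  then show "\<exists>d>0. \<forall>\<nu> W. Pt \<nu> \<and> (\<forall>j\<in>{1..n}. T \<nu> (W j))
      \<and> Sr_dist r \<mu> (\<lambda>_. 1) \<nu> (\<lambda>_. 1) < d \<and> (\<forall>j\<in>{1..n}. Sr_dist r \<mu> (V j) \<nu> (W j) < d)
    \<longrightarrow> \<bar>\<Theta> \<nu> W - \<Theta> \<mu> V\<bar> < e"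
    by (simp add: eventually_Sr_nhds dist_real_def)
qed (use assms(1,2) in blast)+

lemma tendsto_of_dist_le_bound:
  fixes F :: "'x \<Rightarrow> real" and b :: "real \<Rightarrow> real"
  assumes "\<And>d. 0 < d \<Longrightarrow> d \<le> 1 \<Longrightarrow> eventually (\<lambda>z. dist (F z) L \<le> b d) Fl"
    and "(b \<longlongrightarrow> 0) (at_right 0)"
  shows "(F \<longlongrightarrow> L) Fl"
proof (rule tendstoI)
  fix e :: real assume "0 < e"
  then have "eventually (\<lambda>d. b d < e) (at_right 0)" by (rule order_tendstoD(2)[OF assms(2)])
  then obtain d0 where d0: "0 < d0" "\<And>d. 0 < d \<Longrightarrow> d < d0 \<Longrightarrow> b d < e"
    unfolding eventually_at_right_field by auto
  define d where "d = min (d0 / 2) 1"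
  have d: "0 < d" "d \<le> 1" "b d < e" using d0 by (auto simp: d_def)
  show "eventually (\<lambda>z. dist (F z) L < e) Fl"
    using assms(1)[OF d(1,2)] by eventually_elim (use d(3) in linarith)
qed

lemma tendsto_measure_space_Sr_nhds:
  fixes r :: real
  assumes r: "0 < r" "r \<le> 1" and \<mu>: "Mr_point \<Omega> \<mu>"
  shows "((\<lambda>(\<nu>, W). measure \<nu> (space \<nu>)) \<longlongrightarrow> measure \<mu> (space \<mu>)) (Sr_nhds r n (Mr_point \<Omega>) T \<mu> V)"
proof (rule tendsto_of_dist_le_bound)
  fix d :: real assume d: "0 < d" "d \<le> 1"
  have "dist (measure \<nu> (space \<nu>)) (measure \<mu> (space \<mu>)) \<le> Sr_mass_modulus r \<mu> * d"
    if "Mr_point \<Omega> \<nu>" "Sr_dist r \<mu> (\<lambda>_. 1) \<nu> (\<lambda>_. 1) < d" for \<nu>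
  proof -
    interpret Mr_pair r \<Omega> \<mu> \<nu> using r \<mu> that(1) by unfold_locales
    show ?thesis using mass_diff_le_Sr_dist[OF r(2) that(2) d] by (simp add: dist_real_def)
  qed
  then show "eventually (\<lambda>z. dist (case z of (\<nu>, W) \<Rightarrow> measure \<nu> (space \<nu>)) (measure \<mu> (space \<mu>))
      \<le> Sr_mass_modulus r \<mu> * d) (Sr_nhds r n (Mr_point \<Omega>) T \<mu> V)"
    unfolding eventually_Sr_nhds using d(1) by (intro exI[of _ d]) simp
next
  show "((\<lambda>d. Sr_mass_modulus r \<mu> * d) \<longlongrightarrow> 0) (at_right 0)"
    by (intro tendsto_mult_right_zero tendsto_ident_at)
qed

lemma tendsto_integral_prod_Sr_nhds:
  fixes r :: real
  assumes r: "0 < r" "r \<le> 1" and \<mu>: "Mr_point \<Omega> \<mu>" and B: "B \<subseteq> {1..n}" "r * card B \<le> 1"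
    and V: "\<forall>j\<in>{1..n}. TM r \<mu> (V j)"
  shows "((\<lambda>(\<nu>, W). \<integral>x. (\<Prod>j\<in>B. W j x) \<partial>\<nu>) \<longlongrightarrow> (\<integral>x. (\<Prod>j\<in>B. V j x) \<partial>\<mu>))
    (Sr_nhds r n (Mr_point \<Omega>) (TM r) \<mu> V)"
proof -
  have fin: "finite B" using B(1) finite_subset by blast
  define a where "a = (\<Sum>j\<in>B. \<integral>x. \<bar>V j x\<bar> powr (1/r) \<partial>\<mu>)"
  have a: "\<forall>j\<in>B. (\<integral>x. \<bar>V j x\<bar> powr (1/r) \<partial>\<mu>) \<le> a" "0 \<le> a"
    unfolding a_def using fin by (auto intro!: member_le_sum sum_nonneg integral_nonneg_AE)
  define s where "s = 1 - r * card B"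
  define \<Lambda> where "\<Lambda> = (4 powr (1/r) * (a + 1)) powr r"
  define K where "K = Sr_mass_modulus r \<mu>"
  define m where "m = measure \<mu> (space \<mu>)"
  define b where "b d = card B * (d * \<Lambda> ^ (card B - 1) * rpow (m + 1) s)
      + (if s = 0 then 0 else \<Lambda> ^ card B * (K * d) powr s)" for d
  show ?thesis
  proof (rule tendsto_of_dist_le_bound[where b = b])
    fix d :: real assume d: "0 < d" "d \<le> 1"
    have bound: "dist (\<integral>x. (\<Prod>j\<in>B. W j x) \<partial>\<nu>) (\<integral>x. (\<Prod>j\<in>B. V j x) \<partial>\<mu>) \<le> b d"
      if \<nu>: "Mr_point \<Omega> \<nu>" "\<forall>j\<in>{1..n}. TM r \<nu> (W j)"
        and dist: "Sr_dist r \<mu> (\<lambda>_. 1) \<nu> (\<lambda>_. 1) < d" "\<forall>j\<in>{1..n}. Sr_dist r \<mu> (V j) \<nu> (W j) < d"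
      for \<nu> W
    proof -
      interpret Mr_pair r \<Omega> \<mu> \<nu> using r \<mu> \<nu>(1) by unfold_locales
      have "\<forall>j\<in>B. Lr_dens r \<mu> (V j)" "\<forall>j\<in>B. Lr_dens r \<nu> (W j)"
        "\<forall>j\<in>B. Sr_dist r \<mu> (V j) \<nu> (W j) < d"
        using B(1) V \<nu>(2) dist(2) by (auto simp: TM_def)
      from abs_integral_prod_diff_le[OF r(2) fin B(2) this(1,2) a dist(1) this(3) d]
      show ?thesis unfolding b_def s_def \<Lambda>_def K_def m_def dist_real_def .
    qed
    show "eventually (\<lambda>z. dist (case z of (\<nu>, W) \<Rightarrow> \<integral>x. (\<Prod>j\<in>B. W j x) \<partial>\<nu>)
        (\<integral>x. (\<Prod>j\<in>B. V j x) \<partial>\<mu>) \<le> b d) (Sr_nhds r n (Mr_point \<Omega>) (TM r) \<mu> V)"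
      unfolding eventually_Sr_nhds using d(1) bound by (intro exI[of _ d]) simp
  next
    have "((\<lambda>d. (K * d) powr s) \<longlongrightarrow> 0) (at_right 0)" if "s \<noteq> 0"
    proof (rule tendsto_zero_powrI)
      show "((\<lambda>d. K * d) \<longlongrightarrow> 0) (at_right 0)" by (intro tendsto_mult_right_zero tendsto_ident_at)
      show "\<forall>\<^sub>F d in at_right 0. 0 \<le> K * d"
        using Sr_mass_modulus_pos[OF r(1), of \<mu>] by (auto simp: K_def eventually_at_right_field)
      show "0 < s" using that B r unfolding s_def by simp
    qed simp
    then have "((\<lambda>d. if s = 0 then 0 else \<Lambda> ^ card B * (K * d) powr s) \<longlongrightarrow> 0) (at_right 0)"
      by (cases "s = 0") (auto intro: tendsto_mult_right_zero)
    moreover have "((\<lambda>d. card B * (d * \<Lambda> ^ (card B - 1) * rpow (m + 1) s)) \<longlongrightarrow> 0) (at_right 0)"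
      by (intro tendsto_mult_right_zero tendsto_mult_left_zero tendsto_ident_at)
    ultimately show "(b \<longlongrightarrow> 0) (at_right 0)"
      unfolding b_def by (rule tendsto_add_zero[rotated])
  qed
qed

lemma partsM_block:
  fixes r :: real
  assumes "P \<in> partsM r n" "B \<in> P" "0 < r"
  shows "B \<subseteq> {1..n}" "finite B" "r * card B \<le> 1"
proof -
  have "partition_on {1..n} P" "real (card B) \<le> 1 / r" using assms unfolding partsM_def by auto
  then show B: "B \<subseteq> {1..n}" and "r * card B \<le> 1"
    using assms(2,3) by (auto simp: partition_on_def field_simps)
  from B show "finite B" by (rule finite_subset) simp
qed

lemma tau_block_fun_upd_notin:
  assumes "i \<notin> B"
  shows "tau_block r \<mu> B (V(i := h)) = tau_block r \<mu> B V"
proof -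
  have "(\<Prod>j\<in>B. (V(i := h)) j x) = (\<Prod>j\<in>B. V j x)" for x
    using assms by (intro prod.cong) auto
  then show ?thesis by (simp add: tau_block_def)
qed

lemma prod_fun_upd_in:
  assumes "finite B" "i \<in> B"
  shows "(\<Prod>j\<in>B. (V(i := h)) j x) = h x * (\<Prod>j\<in>B - {i}. V j x)"
proof -
  have "(\<Prod>j\<in>B - {i}. (V(i := h)) j x) = (\<Prod>j\<in>B - {i}. V j x)" by (intro prod.cong) auto
  then show ?thesis using assms by (simp add: prod.remove)
qed

lemma tau_block_linear:
  fixes r c :: real
  assumes r: "0 < r" and B: "finite B" "r * card B \<le> 1" "i \<in> B" and \<mu>: "finite_measure \<mu>"
    and V: "\<forall>j\<in>B. Lr_dens r \<mu> (V j)" and \<psi>: "Lr_dens r \<mu> \<psi>"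
  shows "tau_block r \<mu> B (V(i := (\<lambda>x. c * V i x + \<psi> x)))
    = c * tau_block r \<mu> B V + tau_block r \<mu> B (V(i := \<psi>))"
proof -
  have "integrable \<mu> (\<lambda>x. \<Prod>j\<in>B. U j x)" if "\<forall>j\<in>B. Lr_dens r \<mu> (U j)" for U
    using finite_measure.integrable_prod_Lp[OF \<mu> r B(1,2)] that by (simp add: Lr_dens_def)
  then have int: "integrable \<mu> (\<lambda>x. \<Prod>j\<in>B. V j x)" "integrable \<mu> (\<lambda>x. \<Prod>j\<in>B. (V(i := \<psi>)) j x)"
    using V \<psi> by auto
  have "(\<Prod>j\<in>B. (V(i := (\<lambda>x. c * V i x + \<psi> x))) j x)
      = c * (\<Prod>j\<in>B. V j x) + (\<Prod>j\<in>B. (V(i := \<psi>)) j x)" for x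
    using prod_fun_upd_in[OF B(1,3), of V] prod_fun_upd_in[OF B(1,3), of V "V i"]
    by (simp add: algebra_simps)
  then show ?thesis
    unfolding tau_block_def using int by (simp add: algebra_simps)
qed

lemma tauP_linear:
  fixes r c :: real
  assumes r: "0 < r" and P: "P \<in> partsM r n" and \<mu>: "finite_measure \<mu>"
    and V: "\<forall>j\<in>{1..n}. Lr_dens r \<mu> (V j)" and i: "i \<in> {1..n}" and \<psi>: "Lr_dens r \<mu> \<psi>"
  shows "tauP r \<mu> P (V(i := (\<lambda>x. c * V i x + \<psi> x))) = c * tauP r \<mu> P V + tauP r \<mu> P (V(i := \<psi>))"
proof -
  have part: "partition_on {1..n} P" using P by (simp add: partsM_def)
  then have "i \<in> \<Union>P" using i by (simp add: partition_on_def)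
  then obtain B0 where B0: "B0 \<in> P" "i \<in> B0" by blast
  have "finite P" using part by (simp add: finite_UnionD partition_on_def)
  then have split: "tauP r \<mu> P U = tau_block r \<mu> B0 U * (\<Prod>B\<in>P - {B0}. tau_block r \<mu> B U)" for U
    unfolding tauP_def using B0 by (simp add: prod.remove)
  have "i \<notin> B" if "B \<in> P - {B0}" for B
    using part that B0 by (auto simp: partition_on_def disjoint_def)
  then have others: "(\<Prod>B\<in>P - {B0}. tau_block r \<mu> B (V(i := h))) = (\<Prod>B\<in>P - {B0}. tau_block r \<mu> B V)" for h
    by (intro prod.cong) (auto simp: tau_block_fun_upd_notin)
  note B0_props = partsM_block[OF P B0(1) r]
  have "\<forall>j\<in>B0. Lr_dens r \<mu> (V j)" using V B0_props(1) by auto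
  from tau_block_linear[OF r B0_props(2,3) B0(2) \<mu> this \<psi>, of c]
  show ?thesis unfolding split others by (simp add: algebra_simps)
qed

lemma tauP_cong_AE:
  fixes r :: real
  assumes P: "P \<in> partsM r n" and r: "0 < r"
    and VW: "\<forall>j\<in>{1..n}. V j \<in> borel_measurable \<mu> \<and> W j \<in> borel_measurable \<mu> \<and> (AE x in \<mu>. V j x = W j x)"
  shows "tauP r \<mu> P V = tauP r \<mu> P W"
  unfolding tauP_def
proof (intro prod.cong refl)
  fix B assume "B \<in> P"
  note B = partsM_block[OF P this r]
  have "AE x in \<mu>. \<forall>j\<in>B. V j x = W j x" using VW B(1,2) by (subst AE_finite_all) auto
  then have "AE x in \<mu>. (\<Prod>j\<in>B. V j x) = (\<Prod>j\<in>B. W j x)" by eventually_elim simp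
  then have "(\<integral>x. (\<Prod>j\<in>B. V j x) \<partial>\<mu>) = (\<integral>x. (\<Prod>j\<in>B. W j x) \<partial>\<mu>)"
    using VW B(1) by (intro integral_cong_AE) (auto intro!: borel_measurable_prod)
  then show "tau_block r \<mu> B V = tau_block r \<mu> B W" unfolding tau_block_def by simp
qed

definition tauP_sum :: "real \<Rightarrow> nat set set set \<Rightarrow> (nat set set \<Rightarrow> real \<Rightarrow> real)
    \<Rightarrow> 'a measure \<Rightarrow> (nat \<Rightarrow> 'a \<Rightarrow> real) \<Rightarrow> real" where
  "tauP_sum r Q \<alpha> \<mu> V = (\<Sum>P\<in>Q. \<alpha> P (measure \<mu> (space \<mu>)) * tauP r \<mu> P V)"

lemma tendsto_tauP_sum_Sr_nhds:
  fixes r :: real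
  assumes r: "0 < r" "r \<le> 1" and Q: "Q \<subseteq> partsM r n" and \<alpha>: "\<forall>P\<in>Q. continuous_on {0<..} (\<alpha> P)"
    and \<mu>: "Mr_point \<Omega> \<mu>" and V: "\<forall>j\<in>{1..n}. TM r \<mu> (V j)"
  shows "((\<lambda>(\<nu>, W). tauP_sum r Q \<alpha> \<nu> W) \<longlongrightarrow> tauP_sum r Q \<alpha> \<mu> V) (Sr_nhds r n (Mr_point \<Omega>) (TM r) \<mu> V)"
proof -
  have mass_pos: "0 < measure \<mu> (space \<mu>)"
    using \<mu> by (auto simp: Mr_point_def finite_measure.emeasure_eq_measure zero_less_measure_iff)
  note mass = tendsto_measure_space_Sr_nhds[OF r \<mu>, of n "TM r" V, unfolded case_prod_beta']
  have "((\<lambda>z. \<alpha> P (measure (fst z) (space (fst z)))) \<longlongrightarrow> \<alpha> P (measure \<mu> (space \<mu>)))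
      (Sr_nhds r n (Mr_point \<Omega>) (TM r) \<mu> V)" if "P \<in> Q" for P
  proof (rule isCont_tendsto_compose[OF _ mass])
    show "isCont (\<alpha> P) (measure \<mu> (space \<mu>))"
      using \<alpha> that mass_pos by (auto simp: continuous_on_eq_continuous_at)
  qed
  moreover have "((\<lambda>z. \<integral>x. (\<Prod>j\<in>B. snd z j x) \<partial>fst z) \<longlongrightarrow> (\<integral>x. (\<Prod>j\<in>B. V j x) \<partial>\<mu>))
      (Sr_nhds r n (Mr_point \<Omega>) (TM r) \<mu> V)" if "P \<in> Q" "B \<in> P" for P B
    using tendsto_integral_prod_Sr_nhds[OF r \<mu> _ _ V] partsM_block[of P r n B] Q that r
    by (auto simp: case_prod_beta')
  ultimately show ?thesis
    unfolding tauP_sum_def tauP_def tau_block_def case_prod_beta'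
    by (intro tendsto_sum tendsto_mult tendsto_prod tendsto_const) auto
qed

lemma tensor_field_tauP_sum:
  fixes r :: real
  assumes r: "0 < r" "r \<le> 1" and Q: "Q \<subseteq> partsM r n" and \<alpha>: "\<forall>P\<in>Q. continuous_on {0<..} (\<alpha> P)"
  shows "tensor_field r n (Mr_point \<Omega>) (TM r) (tauP_sum r Q \<alpha>)"
proof (rule tensor_fieldI)
  fix \<mu> V W
  assume "\<forall>j\<in>{1..n}. TM r \<mu> (V j) \<and> TM r \<mu> (W j) \<and> (AE x in \<mu>. V j x = W j x)"
  then have "tauP r \<mu> P V = tauP r \<mu> P W" if "P \<in> Q" for P
    using that Q r by (intro tauP_cong_AE[of P r n]) (auto simp: TM_def Lr_dens_def)
  then show "tauP_sum r Q \<alpha> \<mu> V = tauP_sum r Q \<alpha> \<mu> W" by (simp add: tauP_sum_def)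
next
  fix \<mu> V i \<psi> and c :: real
  assume "Mr_point \<Omega> \<mu>" "\<forall>j\<in>{1..n}. TM r \<mu> (V j)" "i \<in> {1..n}" "TM r \<mu> \<psi>"
  then have "tauP r \<mu> P (V(i := (\<lambda>x. c * V i x + \<psi> x))) = c * tauP r \<mu> P V + tauP r \<mu> P (V(i := \<psi>))"
    if "P \<in> Q" for P
    using that Q r by (intro tauP_linear[of r P n]) (auto simp: TM_def Mr_point_def)
  then show "tauP_sum r Q \<alpha> \<mu> (V(i := (\<lambda>x. c * V i x + \<psi> x)))
      = c * tauP_sum r Q \<alpha> \<mu> V + tauP_sum r Q \<alpha> \<mu> (V(i := \<psi>))"
    by (simp add: tauP_sum_def algebra_simps sum.distrib sum_distrib_left)
qed (rule tendsto_tauP_sum_Sr_nhds[OF r Q \<alpha>])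

lemma tensor_field_restrict:
  assumes \<Theta>: "tensor_field r n Pt T \<Theta>" and Pt: "\<And>\<mu>. Pt' \<mu> \<Longrightarrow> Pt \<mu>"
    and T: "\<And>\<mu> \<phi>. Pt' \<mu> \<Longrightarrow> T' \<mu> \<phi> \<Longrightarrow> T \<mu> \<phi>"
  shows "tensor_field r n Pt' T' \<Theta>"
  unfolding tensor_field_def
proof (intro conjI allI impI)
  note \<Theta>' = \<Theta>[unfolded tensor_field_def]
  fix \<mu> V W assume "Pt' \<mu> \<and> (\<forall>j\<in>{1..n}. T' \<mu> (V j) \<and> T' \<mu> (W j) \<and> (AE x in \<mu>. V j x = W j x))"
  then have "Pt \<mu> \<and> (\<forall>j\<in>{1..n}. T \<mu> (V j) \<and> T \<mu> (W j) \<and> (AE x in \<mu>. V j x = W j x))" using Pt T by blast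
  then show "\<Theta> \<mu> V = \<Theta> \<mu> W" using \<Theta>' by blast
next
  note \<Theta>' = \<Theta>[unfolded tensor_field_def]
  fix \<mu> V i \<psi> c assume "Pt' \<mu> \<and> (\<forall>j\<in>{1..n}. T' \<mu> (V j)) \<and> i \<in> {1..n} \<and> T' \<mu> \<psi>"
  then have "Pt \<mu> \<and> (\<forall>j\<in>{1..n}. T \<mu> (V j)) \<and> i \<in> {1..n} \<and> T \<mu> \<psi>" using Pt T by blast
  then show "\<Theta> \<mu> (V(i := (\<lambda>x. c * V i x + \<psi> x))) = c * \<Theta> \<mu> V + \<Theta> \<mu> (V(i := \<psi>))" using \<Theta>' by blast
next
  note \<Theta>' = \<Theta>[unfolded tensor_field_def]
  fix \<mu> V and e :: real assume "Pt' \<mu> \<and> (\<forall>j\<in>{1..n}. T' \<mu> (V j))" and e: "0 < e"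
  then have "Pt \<mu> \<and> (\<forall>j\<in>{1..n}. T \<mu> (V j))" using Pt T by blast
  then obtain d where "d > 0" "\<forall>\<nu> W. Pt \<nu> \<and> (\<forall>j\<in>{1..n}. T \<nu> (W j))
      \<and> Sr_dist r \<mu> (\<lambda>_. 1) \<nu> (\<lambda>_. 1) < d \<and> (\<forall>j\<in>{1..n}. Sr_dist r \<mu> (V j) \<nu> (W j) < d)
      \<longrightarrow> \<bar>\<Theta> \<nu> W - \<Theta> \<mu> V\<bar> < e"
    using \<Theta>'[THEN conjunct2, THEN conjunct2, rule_format, OF _ e] by blast
  then show "\<exists>d>0. \<forall>\<nu> W. Pt' \<nu> \<and> (\<forall>j\<in>{1..n}. T' \<nu> (W j))
      \<and> Sr_dist r \<mu> (\<lambda>_. 1) \<nu> (\<lambda>_. 1) < d \<and> (\<forall>j\<in>{1..n}. Sr_dist r \<mu> (V j) \<nu> (W j) < d)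
      \<longrightarrow> \<bar>\<Theta> \<nu> W - \<Theta> \<mu> V\<bar> < e"
    using Pt T by blast
qed

section \<open>Invariance under congruent Markov kernels\<close>

lemma (in finite_measure) integrable_Lr_dens:
  fixes r :: real
  assumes "0 < r" "r \<le> 1" "Lr_dens r M \<phi>"
  shows "integrable M \<phi>"
proof -
  have "integrable M (\<lambda>x. \<Prod>j\<in>{0::nat}. \<phi> x)"
    using assms by (intro integrable_prod_Lp) (auto simp: Lr_dens_def)
  then show ?thesis by simp
qed

locale congruent_push =
  fixes \<Omega> :: "'a measure" and \<Omega>' :: "'b measure" and K :: "'a \<Rightarrow> 'b measure" and \<kappa> :: "'b \<Rightarrow> 'a"
    and \<mu> :: "'a measure"
  assumes K_meas: "K \<in> \<Omega> \<rightarrow>\<^sub>M prob_algebra \<Omega>'"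
    and \<kappa>_meas [measurable]: "\<kappa> \<in> \<Omega>' \<rightarrow>\<^sub>M \<Omega>"
    and distr_K: "\<And>\<omega>. \<omega> \<in> space \<Omega> \<Longrightarrow> distr (K \<omega>) \<Omega> \<kappa> = return \<Omega> \<omega>"
    and Mr_\<mu>: "Mr_point \<Omega> \<mu>"
begin

abbreviation \<mu>' where "\<mu>' \<equiv> kpush \<Omega>' K \<mu>"

lemma sets_\<mu>: "sets \<mu> = sets \<Omega>" and space_\<mu>: "space \<mu> = space \<Omega>"
  and fin_\<mu>: "finite_measure \<mu>" and space_\<mu>_ne: "space \<mu> \<noteq> {}"
  using Mr_\<mu> sets_eq_imp_space_eq[of \<mu> \<Omega>] by (auto simp: Mr_point_def)

lemma K_prob: "\<omega> \<in> space \<Omega> \<Longrightarrow> sets (K \<omega>) = sets \<Omega>' \<and> prob_space (K \<omega>)"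
  using measurable_space[OF K_meas] by (auto simp: space_prob_algebra)

lemma K_subprob: "K \<in> \<mu> \<rightarrow>\<^sub>M subprob_algebra \<Omega>'"
  by (subst measurable_cong_sets[OF sets_\<mu> refl]) (rule measurable_prob_algebraD[OF K_meas])

lemma kpush_eq_bind: "\<mu>' = bind \<mu> K"
proof -
  have sets_bind: "sets (bind \<mu> K) = sets \<Omega>'" using K_prob space_\<mu> space_\<mu>_ne by (intro sets_bind) auto
  have "bind \<mu> K = measure_of (space (bind \<mu> K)) (sets (bind \<mu> K)) (emeasure (bind \<mu> K))"
    by (rule measure_of_of_measure[symmetric])
  also have "\<dots> = measure_of (space \<Omega>') (sets \<Omega>') (emeasure (bind \<mu> K))"
    unfolding sets_bind sets_eq_imp_space_eq[OF sets_bind] ..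
  also have "\<dots> = \<mu>'" unfolding kpush_def
  proof (rule measure_of_eq)
    fix A assume "A \<in> sigma_sets (space \<Omega>') (sets \<Omega>')"
    then show "emeasure (bind \<mu> K) A = (\<integral>\<^sup>+\<omega>. emeasure (K \<omega>) A \<partial>\<mu>)"
      by (intro emeasure_bind[OF space_\<mu>_ne K_subprob]) (simp add: sets.sigma_sets_eq)
  qed (rule sets.space_closed)
  finally show ?thesis ..
qed

lemma sets_kpush [measurable_cong]: "sets \<mu>' = sets \<Omega>'" and space_kpush: "space \<mu>' = space \<Omega>'"
proof -
  show "sets \<mu>' = sets \<Omega>'" unfolding kpush_eq_bind using K_prob space_\<mu> space_\<mu>_ne by (intro sets_bind) auto
  then show "space \<mu>' = space \<Omega>'" by (rule sets_eq_imp_space_eq)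
qed

lemma \<kappa>_meas_kpush: "\<kappa> \<in> \<mu>' \<rightarrow>\<^sub>M \<Omega>"
  by (subst measurable_cong_sets[OF sets_kpush refl]) (rule \<kappa>_meas)

lemma \<kappa>_meas_K: "\<omega> \<in> space \<Omega> \<Longrightarrow> \<kappa> \<in> K \<omega> \<rightarrow>\<^sub>M \<Omega>"
  using measurable_cong_sets[of "K \<omega>" \<Omega>' \<Omega> \<Omega>] K_prob by simp

lemma distr_kpush: "distr \<mu>' \<Omega> \<kappa> = \<mu>"
proof (rule measure_eqI)
  fix A assume "A \<in> sets (distr \<mu>' \<Omega> \<kappa>)"
  then have A: "A \<in> sets \<Omega>" by simp
  have "emeasure (K \<omega>) (\<kappa> -` A \<inter> space \<Omega>') = indicator A \<omega>" if "\<omega> \<in> space \<Omega>" for \<omega>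
    using emeasure_distr[OF \<kappa>_meas_K[OF that] A] distr_K[OF that] A that K_prob
      sets_eq_imp_space_eq[of "K \<omega>" \<Omega>'] by simp
  then have fibre: "emeasure (K \<omega>) (\<kappa> -` A \<inter> space \<Omega>') = indicator A \<omega>" if "\<omega> \<in> space \<mu>" for \<omega>
    using that space_\<mu> by simp
  have "emeasure (distr \<mu>' \<Omega> \<kappa>) A = emeasure \<mu>' (\<kappa> -` A \<inter> space \<mu>')"
    by (rule emeasure_distr[OF \<kappa>_meas_kpush A])
  also have "\<dots> = (\<integral>\<^sup>+\<omega>. emeasure (K \<omega>) (\<kappa> -` A \<inter> space \<Omega>') \<partial>\<mu>)"
    unfolding space_kpush unfolding kpush_eq_bind
    by (rule emeasure_bind[OF space_\<mu>_ne K_subprob]) (use A in measurable)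
  also have "\<dots> = emeasure \<mu> A"
    using fibre A sets_\<mu> by (simp cong: nn_integral_cong)
  finally show "emeasure (distr \<mu>' \<Omega> \<kappa>) A = emeasure \<mu> A" .
qed (simp add: sets_\<mu>)

lemma measure_space_kpush: "measure \<mu>' (space \<mu>') = measure \<mu> (space \<mu>)"
proof -
  have "measure \<mu> (space \<mu>) = measure \<mu>' (\<kappa> -` space \<Omega> \<inter> space \<mu>')"
    using measure_distr[OF \<kappa>_meas_kpush, of "space \<Omega>"] distr_kpush space_\<mu> by simp
  also have "\<kappa> -` space \<Omega> \<inter> space \<mu>' = space \<mu>'" using measurable_space[OF \<kappa>_meas_kpush] by auto
  finally show ?thesis ..
qed

end

context congruent_push
begin

lemma AE_K_comp:
  fixes h :: "'a \<Rightarrow> real"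
  assumes \<omega>: "\<omega> \<in> space \<Omega>" and h [measurable]: "h \<in> borel_measurable \<Omega>"
  shows "AE y in K \<omega>. h (\<kappa> y) = h \<omega>"
proof -
  have "{x \<in> space \<Omega>. h x = h \<omega>} \<in> sets \<Omega>" by measurable
  moreover have "AE x in distr (K \<omega>) \<Omega> \<kappa>. h x = h \<omega>"
    unfolding distr_K[OF \<omega>] using \<omega> by (simp add: AE_return)
  ultimately show ?thesis using AE_distr_iff[OF \<kappa>_meas_K[OF \<omega>]] by simp
qed

lemma nn_integral_kpush_indicator_comp:
  fixes h :: "'a \<Rightarrow> real"
  assumes h [measurable]: "h \<in> borel_measurable \<Omega>" and A: "A \<in> sets \<Omega>'"
  shows "(\<integral>\<^sup>+y. ennreal (indicator A y * h (\<kappa> y)) \<partial>\<mu>') = (\<integral>\<^sup>+\<omega>. ennreal (h \<omega> * measure (K \<omega>) A) \<partial>\<mu>)"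
proof -
  have "(\<lambda>y. ennreal (indicator A y * h (\<kappa> y))) \<in> borel_measurable \<Omega>'" using A by measurable
  then have "(\<integral>\<^sup>+y. ennreal (indicator A y * h (\<kappa> y)) \<partial>\<mu>')
      = (\<integral>\<^sup>+\<omega>. \<integral>\<^sup>+y. ennreal (indicator A y * h (\<kappa> y)) \<partial>K \<omega> \<partial>\<mu>)"
    unfolding kpush_eq_bind by (rule nn_integral_bind[OF _ K_subprob])
  also have "\<dots> = (\<integral>\<^sup>+\<omega>. ennreal (h \<omega> * measure (K \<omega>) A) \<partial>\<mu>)"
  proof (rule nn_integral_cong)
    fix \<omega> assume "\<omega> \<in> space \<mu>"
    then have \<omega>: "\<omega> \<in> space \<Omega>" using space_\<mu> by simp
    interpret K\<omega>: prob_space "K \<omega>" using K_prob[OF \<omega>] by simp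
    have A': "A \<in> sets (K \<omega>)" using K_prob[OF \<omega>] A by simp
    have "(\<integral>\<^sup>+y. ennreal (indicator A y * h (\<kappa> y)) \<partial>K \<omega>) = (\<integral>\<^sup>+y. ennreal (h \<omega>) * indicator A y \<partial>K \<omega>)"
      using AE_K_comp[OF \<omega> h] by (intro nn_integral_cong_AE) (auto simp: indicator_def)
    also have "\<dots> = ennreal (h \<omega>) * emeasure (K \<omega>) A" by (rule nn_integral_cmult_indicator[OF A'])
    also have "\<dots> = ennreal (h \<omega> * measure (K \<omega>) A)"
      by (cases "0 \<le> h \<omega>") (auto simp: K\<omega>.emeasure_eq_measure ennreal_mult ennreal_neg mult_nonpos_nonneg)
    finally show "(\<integral>\<^sup>+y. ennreal (indicator A y * h (\<kappa> y)) \<partial>K \<omega>) = ennreal (h \<omega> * measure (K \<omega>) A)" .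
  qed
  finally show ?thesis .
qed

lemma
  fixes h :: "'a \<Rightarrow> real"
  assumes h [measurable]: "h \<in> borel_measurable \<Omega>" and h_int: "integrable \<mu> h"
  shows integrable_kpush_comp: "integrable \<mu>' (\<lambda>y. h (\<kappa> y))"
    and set_integral_kpush_comp:
      "A \<in> sets \<Omega>' \<Longrightarrow> set_lebesgue_integral \<mu>' A (\<lambda>y. h (\<kappa> y)) = (\<integral>\<omega>. h \<omega> * measure (K \<omega>) A \<partial>\<mu>)"
proof -
  show int: "integrable \<mu>' (\<lambda>y. h (\<kappa> y))"
    using integrable_distr_eq[OF \<kappa>_meas_kpush h] h_int distr_kpush by simp
  assume A: "A \<in> sets \<Omega>'"
  have int_A: "integrable \<mu>' (\<lambda>y. indicator A y * h (\<kappa> y))"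
    using integrable_mult_indicator[of A \<mu>' "\<lambda>y. h (\<kappa> y)"] int A sets_kpush by simp
  have K_A_meas: "(\<lambda>\<omega>. measure (K \<omega>) A) \<in> borel_measurable \<mu>"
    by (subst measurable_cong_sets[OF sets_\<mu> refl])
      (rule measurable_compose[OF K_meas measurable_measure_prob_algebra[OF A]])
  have h_\<mu>: "h \<in> borel_measurable \<mu>" by (subst measurable_cong_sets[OF sets_\<mu> refl]) (rule h)
  have int_K: "integrable \<mu> (\<lambda>\<omega>. h \<omega> * measure (K \<omega>) A)"
  proof (rule Bochner_Integration.integrable_bound[OF h_int])
    show "(\<lambda>\<omega>. h \<omega> * measure (K \<omega>) A) \<in> borel_measurable \<mu>"
      by (intro borel_measurable_times h_\<mu> K_A_meas)
    show "AE \<omega> in \<mu>. norm (h \<omega> * measure (K \<omega>) A) \<le> norm (h \<omega>)"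
    proof (rule AE_I2)
      fix \<omega> assume "\<omega> \<in> space \<mu>"
      then interpret K\<omega>: prob_space "K \<omega>" using K_prob space_\<mu> by simp
      show "norm (h \<omega> * measure (K \<omega>) A) \<le> norm (h \<omega>)" by (simp add: abs_mult mult_left_le)
    qed
  qed
  have minus_h: "(\<lambda>\<omega>. - h \<omega>) \<in> borel_measurable \<Omega>" by measurable
  show "set_lebesgue_integral \<mu>' A (\<lambda>y. h (\<kappa> y)) = (\<integral>\<omega>. h \<omega> * measure (K \<omega>) A \<partial>\<mu>)"
    unfolding set_lebesgue_integral_def real_lebesgue_integral_def[OF int_K]
    using real_lebesgue_integral_def[OF int_A] nn_integral_kpush_indicator_comp[OF h A]
      nn_integral_kpush_indicator_comp[OF minus_h A]
    by simp
qed

end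

context congruent_push
begin

text \<open>The density \<open>d{K\<^sub>*(\<phi>\<mu>)}/d\<mu>'\<close> is \<open>\<phi> \<circ> \<kappa>\<close>; \<open>kderiv\<close> picks some version of it.\<close>

lemma
  fixes r :: real
  assumes r: "0 < r" "r \<le> 1" and \<phi>: "Lr_dens r \<mu> \<phi>"
  shows borel_measurable_kderiv: "kderiv \<Omega>' K \<mu> \<phi> \<in> borel_measurable \<mu>'"
    and AE_kderiv_eq_comp: "AE y in \<mu>'. kderiv \<Omega>' K \<mu> \<phi> y = \<phi> (\<kappa> y)"
proof -
  define is_dens where "is_dens g \<longleftrightarrow> g \<in> borel_measurable \<Omega>' \<and> integrable \<mu>' g \<and>
      (\<forall>A\<in>sets \<Omega>'. set_lebesgue_integral \<mu>' A g = (\<integral>\<omega>. \<phi> \<omega> * measure (K \<omega>) A \<partial>\<mu>))" for g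
  have \<phi>_meas [measurable]: "\<phi> \<in> borel_measurable \<Omega>"
    using \<phi> measurable_cong_sets[OF sets_\<mu> refl] by (auto simp: Lr_dens_def)
  have \<phi>_int: "integrable \<mu> \<phi>" using finite_measure.integrable_Lr_dens[OF fin_\<mu> r \<phi>] .
  have comp: "is_dens (\<lambda>y. \<phi> (\<kappa> y))"
    unfolding is_dens_def
    using integrable_kpush_comp[OF \<phi>_meas \<phi>_int] set_integral_kpush_comp[OF \<phi>_meas \<phi>_int] by simp
  moreover have "kderiv \<Omega>' K \<mu> \<phi> = (SOME g. is_dens g)" unfolding kderiv_def is_dens_def ..
  ultimately have kd: "is_dens (kderiv \<Omega>' K \<mu> \<phi>)" using someI[of is_dens] by metis
  then show "kderiv \<Omega>' K \<mu> \<phi> \<in> borel_measurable \<mu>'"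
    unfolding is_dens_def by (subst measurable_cong_sets[OF sets_kpush refl]) simp
  show "AE y in \<mu>'. kderiv \<Omega>' K \<mu> \<phi> y = \<phi> (\<kappa> y)"
    using kd comp sets_kpush unfolding is_dens_def by (intro density_unique_real) auto
qed

lemma tauP_pullback:
  fixes r :: real
  assumes r: "0 < r" "r \<le> 1" and P: "P \<in> partsM r n" and V: "\<forall>j\<in>{1..n}. TM r \<mu> (V j)"
  shows "tauP r \<mu>' P (\<lambda>j. kderiv \<Omega>' K \<mu> (V j)) = tauP r \<mu> P V"
  unfolding tauP_def
proof (intro prod.cong refl)
  fix B assume "B \<in> P"
  note B = partsM_block[OF P this r(1)]
  have V_B: "Lr_dens r \<mu> (V j)" if "j \<in> B" for j using V B(1) that by (auto simp: TM_def)
  have prod_meas: "(\<lambda>x. \<Prod>j\<in>B. V j x) \<in> borel_measurable \<Omega>"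
    using V_B measurable_cong_sets[OF sets_\<mu> refl] by (auto simp: Lr_dens_def intro!: borel_measurable_prod)
  have "AE y in \<mu>'. \<forall>j\<in>B. kderiv \<Omega>' K \<mu> (V j) y = V j (\<kappa> y)"
    using AE_kderiv_eq_comp[OF r V_B] B(2) by (subst AE_finite_all) auto
  then have "AE y in \<mu>'. (\<Prod>j\<in>B. kderiv \<Omega>' K \<mu> (V j) y) = (\<Prod>j\<in>B. V j (\<kappa> y))"
    by eventually_elim simp
  then have "(\<integral>y. (\<Prod>j\<in>B. kderiv \<Omega>' K \<mu> (V j) y) \<partial>\<mu>') = (\<integral>y. (\<Prod>j\<in>B. V j (\<kappa> y)) \<partial>\<mu>')"
    using borel_measurable_kderiv[OF r V_B] measurable_comp[OF \<kappa>_meas_kpush prod_meas]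
    by (intro integral_cong_AE) (auto simp: comp_def)
  also have "\<dots> = (\<integral>x. (\<Prod>j\<in>B. V j x) \<partial>\<mu>)"
    using integral_distr[OF \<kappa>_meas_kpush prod_meas] distr_kpush by simp
  finally show "tau_block r \<mu>' B (\<lambda>j. kderiv \<Omega>' K \<mu> (V j)) = tau_block r \<mu> B V"
    by (simp add: tau_block_def)
qed

end

lemma pullback_tauP_sum:
  fixes r :: real
  assumes r: "0 < r" "r \<le> 1" and Q: "Q \<subseteq> partsM r n"
    and K: "congruent_kernel \<Omega> \<Omega>' K" and \<mu>: "Mr_point \<Omega> \<mu>" and V: "\<forall>j\<in>{1..n}. TM r \<mu> (V j)"
  shows "pullback \<Omega>' K (tauP_sum r Q \<alpha>) \<mu> V = tauP_sum r Q \<alpha> \<mu> V"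
proof -
  obtain \<kappa> where "\<kappa> \<in> \<Omega>' \<rightarrow>\<^sub>M \<Omega>" "\<forall>\<omega>\<in>space \<Omega>. distr (K \<omega>) \<Omega> \<kappa> = return \<Omega> \<omega>"
    and "K \<in> \<Omega> \<rightarrow>\<^sub>M prob_algebra \<Omega>'"
    using K unfolding congruent_kernel_def by blast
  then interpret congruent_push \<Omega> \<Omega>' K \<kappa> \<mu> using \<mu> by unfold_locales auto
  show ?thesis
    unfolding pullback_def tauP_sum_def measure_space_kpush
    using tauP_pullback[OF r _ V] Q by (intro sum.cong refl) auto
qed

lemma Mr_point_if_Pr_point: "Pr_point \<Omega> \<mu> \<Longrightarrow> Mr_point \<Omega> \<mu>"
  by (auto simp: Pr_point_def Mr_point_def prob_space_def prob_space_axioms_def)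

theorem proposition3p7:
  fixes r :: real and n :: nat
    and a :: "nat set set \<Rightarrow> real \<Rightarrow> real"
    and c :: "nat set set \<Rightarrow> real"
  assumes r: "0 < r" "r \<le> 1"
    and a_cont: "\<forall>P\<in>partsM r n. continuous_on {0<..} (a P)"
  shows
    "(\<forall>\<Omega> :: 'a measure. tensor_field r n (Mr_point \<Omega>) (TM r) (tildeTheta r n a)) \<and>
     (\<forall>(\<Omega> :: 'a measure) (\<Omega>' :: 'b measure) K \<mu> V.
        congruent_kernel \<Omega> \<Omega>' K \<and> Mr_point \<Omega> \<mu> \<and> (\<forall>j\<in>{1..n}. TM r \<mu> (V j))
        \<longrightarrow> pullback \<Omega>' K (tildeTheta r n a) \<mu> V = tildeTheta r n a \<mu> V) \<and>
     (\<forall>\<Omega> :: 'a measure. tensor_field r n (Pr_point \<Omega>) (TP r) (Theta r n c)) \<and>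
     (\<forall>(\<Omega> :: 'a measure) (\<Omega>' :: 'b measure) K \<mu> V.
        congruent_kernel \<Omega> \<Omega>' K \<and> Pr_point \<Omega> \<mu> \<and> (\<forall>j\<in>{1..n}. TP r \<mu> (V j))
        \<longrightarrow> pullback \<Omega>' K (Theta r n c) \<mu> V = Theta r n c \<mu> V)"
proof -
  have tildeTheta_eq: "tildeTheta r n a = tauP_sum r (partsM r n) a"
    by (intro ext) (simp add: tildeTheta_def tauP_sum_def)
  have Theta_eq: "Theta r n c = tauP_sum r (partsP r n) (\<lambda>P _. c P)"
    by (intro ext) (simp add: Theta_def tauP_sum_def)
  have partsP: "partsP r n \<subseteq> partsM r n" "\<forall>P\<in>partsP r n. continuous_on {0<..} (\<lambda>_. c P)"
    by (auto simp: partsP_def partsM_def)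
  have TP_TM: "TP r \<mu> \<phi> \<Longrightarrow> TM r \<mu> \<phi>" for \<mu> :: "'a measure" and \<phi>
    by (simp add: TP_def TM_def)
  show ?thesis
    unfolding tildeTheta_eq Theta_eq
  proof (intro conjI allI impI)
    fix \<Omega> :: "'a measure"
    show "tensor_field r n (Mr_point \<Omega>) (TM r) (tauP_sum r (partsM r n) a)"
      by (rule tensor_field_tauP_sum[OF r order_refl a_cont])
    show "tensor_field r n (Pr_point \<Omega>) (TP r) (tauP_sum r (partsP r n) (\<lambda>P _. c P))"
      by (rule tensor_field_restrict[OF tensor_field_tauP_sum[OF r partsP]])
        (auto intro: Mr_point_if_Pr_point TP_TM)
  next
    fix \<Omega> :: "'a measure" and \<Omega>' :: "'b measure" and K \<mu> V
    assume "congruent_kernel \<Omega> \<Omega>' K \<and> Mr_point \<Omega> \<mu> \<and> (\<forall>j\<in>{1..n}. TM r \<mu> (V j))"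
    then show "pullback \<Omega>' K (tauP_sum r (partsM r n) a) \<mu> V = tauP_sum r (partsM r n) a \<mu> V"
      using pullback_tauP_sum[OF r order_refl] by blast
  next
    fix \<Omega> :: "'a measure" and \<Omega>' :: "'b measure" and K \<mu> V
    assume "congruent_kernel \<Omega> \<Omega>' K \<and> Pr_point \<Omega> \<mu> \<and> (\<forall>j\<in>{1..n}. TP r \<mu> (V j))"
    then have "congruent_kernel \<Omega> \<Omega>' K" "Mr_point \<Omega> \<mu>" "\<forall>j\<in>{1..n}. TM r \<mu> (V j)"
      using Mr_point_if_Pr_point TP_TM by blast+
    then show "pullback \<Omega>' K (tauP_sum r (partsP r n) (\<lambda>P _. c P)) \<mu> V
        = tauP_sum r (partsP r n) (\<lambda>P _. c P) \<mu> V"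
      by (rule pullback_tauP_sum[OF r partsP(1)])
  qed
qed

end
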